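(* For all $u,v,x,y\in H$: (i) $T(u\otimes v\otimes x\otimes A^*y)=\bar T(y\otimes u\otimes Av\otimes x)$; (ii) $T(u\otimes x\otimes v\otimes y)=\bar T(u\otimes Av\otimes Bx\otimes y)$; (iii) $T(u\otimes v\otimes x\otimes y)=\bar T(v\otimes Bx\otimes y\otimes B^*u)$.
   Context: Let $\mathcal C$ be a strict monoidal category with tensor product $\boxtimes$ and unit object $\mathbb I$ which is an Ab-category (all Hom-sets are abelian groups, composition and $\boxtimes$ are biadditive) whose ground ring $\mathsf k=\operatorname{End}(\mathbb I)$ is a field; each $\operatorname{Hom}(V,W)$ is a $\mathsf k$-vector space via $kf=k\boxtimes f$, and $\boxtimes$ is $\mathsf k$-bilinear on morphisms. An object $V$ is simple if $\operatorname{End}(V)=\mathsf k\,\mathrm{Id}_V$; for such $V$ and $f\in\operatorname{End}(V)$, $\langle f\rangle\in\mathsf k$ denotes the scalar with $f=\langle f\rangle\mathrm{Id}_V$. For objects $V_i$ write $H^{ij}_k=\operatorname{Hom}(V_k,V_i\boxtimes V_j)$ and $H^k_{ij}=\operatorname{Hom}(V_i\boxtimes V_j,V_k)$. A $\Psi$-system in $\mathcal C$ consists of (1) a family of simple objects $\{V_i\}_{i\in I}$ with $\operatorname{Hom}(V_i,V_j)=0$ for $i\neq j$; (2) an involution $i\mapsto i^*$ of $I$; (3) morphisms $b_i:\mathbb I\to V_i\boxtimes V_{i^*}$, $d_i:V_i\boxtimes V_{i^*}\to\mathbb I$ ($i\in I$) with $(\mathrm{Id}_{V_i}\boxtimes d_{i^*})(b_i\boxtimes\mathrm{Id}_{V_i})=\mathrm{Id}_{V_i}$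 and $(d_i\boxtimes\mathrm{Id}_{V_i})(\mathrm{Id}_{V_i}\boxtimes b_{i^*})=\mathrm{Id}_{V_i}$; (4) for all $i,j\in I$ such that $H^{ij}_k\neq0$ for some $k\in I$, the morphism $\mathrm{Id}_{V_i\boxtimes V_j}$ lies in the image of the linear map $\bigoplus_{k\in I}H^{ij}_k\otimes_{\mathsf k}H^k_{ij}\to\operatorname{End}(V_i\boxtimes V_j)$, $x\otimes y\mapsto x\circ y$. Fix a $\Psi$-system in $\mathcal C$. Let $\hat H=\bigoplus_{i,j,k\in I}H^k_{ij}$, $\check H=\bigoplus_{i,j,k\in I}H^{ij}_k$, $H=\hat H\oplus\check H$, and let $\pi^k_{ij}:H\to H^k_{ij}$, $\pi^{ij}_k:H\to H^{ij}_k$ be the projections. Define $A,B\in\operatorname{End}_{\mathsf k}(H)$ by $Ax=\sum_{i,j,k\in I}\big((\mathrm{Id}_{V_{i^*}}\boxtimes\pi^k_{ij}x)(b_{i^*}\boxtimes\mathrm{Id}_{V_j})+(d_{i^*}\boxtimes\mathrm{Id}_{V_j})(\mathrm{Id}_{V_{i^*}}\boxtimes\pi^{ij}_kx)\big)$, $Bx=\sum_{i,j,k\in I}\big((\pi^k_{ij}x\boxtimes\mathrm{Id}_{V_{j^*}})(\mathrm{Id}_{V_i}\boxtimes b_j)+(\mathrm{Id}_{V_i}\boxtimes d_j)(\pi^{ij}_kx\boxtimes\mathrm{Id}_{V_{j^*}})\big)$. Define the symmetric bilinear form on $H$: $\langle x,y\rangle=\sum_{i,j,k\in I}\big(\langle\pi^k_{ij}x\circ\pi^{ij}_ky\rangle+\langle\pi^k_{ij}y\circ\pi^{ij}_kx\rangle\big)$.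 A transpose of $f\in\operatorname{End}(H)$ is the (unique) $f^*\in\operatorname{End}(H)$ with $\langle fx,y\rangle=\langle x,f^*y\rangle$ for all $x,y\in H$; $A^*$, $B^*$ denote the transposes of $A$, $B$ (which exist). Define linear forms $T,\bar T:H^{\otimes4}\to\mathsf k$ (tensor products over $\mathsf k$) by $T(u\otimes v\otimes x\otimes y)=\sum_{i,j,k,l,m,n\in I}\big\langle \pi^m_{kl}u\circ(\pi^k_{ij}v\boxtimes\mathrm{Id}_{V_l})\circ(\mathrm{Id}_{V_i}\boxtimes\pi^{jl}_nx)\circ\pi^{in}_my\big\rangle$, $\bar T(u\otimes v\otimes x\otimes y)=\sum_{i,j,k,l,m,n\in I}\big\langle\pi^m_{in}u\circ(\mathrm{Id}_{V_i}\boxtimes\pi^n_{jl}v)\circ(\pi^{ij}_kx\boxtimes\mathrm{Id}_{V_l})\circ\pi^{kl}_my\big\rangle$ (only finitely many terms are nonzero). *)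

theory Defs
  imports Main
begin

section \<open>Strict monoidal Ab-categories (encoded concretely)\<close>

text \<open>A category is given by a set of objects, a set of morphisms with domain and
codomain maps, composition (cmp g f = g o f), identities, a strict tensor product
on objects and morphisms with unit object, and an abelian group structure on each
Hom-set (addition madd, zero mzero a b, negation mneg).\<close>

record ('o, 'm) mcat =
  Ob   :: "'o set"
  Mor  :: "'m set"
  dom  :: "'m \<Rightarrow> 'o"
  cod  :: "'m \<Rightarrow> 'o"
  cmp  :: "'m \<Rightarrow> 'm \<Rightarrow> 'm"
  idm  :: "'o \<Rightarrow> 'm"
  tno  :: "'o \<Rightarrow> 'o \<Rightarrow> 'o"
  tnm  :: "'m \<Rightarrow> 'm \<Rightarrow> 'm"
  unit :: "'o"
  madd :: "'m \<Rightarrow> 'm \<Rightarrow> 'm"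
  mzero :: "'o \<Rightarrow> 'o \<Rightarrow> 'm"
  mneg :: "'m \<Rightarrow> 'm"

definition Hom :: "('o, 'm) mcat \<Rightarrow> 'o \<Rightarrow> 'o \<Rightarrow> 'm set" where
  "Hom C a b = {f \<in> Mor C. dom C f = a \<and> cod C f = b}"

definition is_category :: "('o, 'm) mcat \<Rightarrow> bool" where
  "is_category C \<longleftrightarrow>
     (\<forall>f\<in>Mor C. dom C f \<in> Ob C \<and> cod C f \<in> Ob C) \<and>
     (\<forall>a\<in>Ob C. idm C a \<in> Hom C a a) \<and>
     (\<forall>a\<in>Ob C. \<forall>b\<in>Ob C. \<forall>c\<in>Ob C. \<forall>f\<in>Hom C a b. \<forall>g\<in>Hom C b c.
         cmp C g f \<in> Hom C a c) \<and>
     (\<forall>a\<in>Ob C. \<forall>b\<in>Ob C. \<forall>c\<in>Ob C. \<forall>e\<in>Ob C. \<forall>f\<in>Hom C a b. \<forall>g\<in>Hom C b c. \<forall>h\<in>Hom C c e.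
         cmp C h (cmp C g f) = cmp C (cmp C h g) f) \<and>
     (\<forall>a\<in>Ob C. \<forall>b\<in>Ob C. \<forall>f\<in>Hom C a b.
         cmp C f (idm C a) = f \<and> cmp C (idm C b) f = f)"

definition is_strict_monoidal :: "('o, 'm) mcat \<Rightarrow> bool" where
  "is_strict_monoidal C \<longleftrightarrow>
     unit C \<in> Ob C \<and>
     (\<forall>a\<in>Ob C. \<forall>b\<in>Ob C. tno C a b \<in> Ob C) \<and>
     (\<forall>a\<in>Ob C. \<forall>b\<in>Ob C. \<forall>c\<in>Ob C. \<forall>e\<in>Ob C. \<forall>f\<in>Hom C a b. \<forall>g\<in>Hom C c e.
         tnm C f g \<in> Hom C (tno C a c) (tno C b e)) \<and>
     (\<forall>a\<in>Ob C. \<forall>b\<in>Ob C. \<forall>c\<in>Ob C. tno C (tno C a b) c = tno C a (tno C b c)) \<and>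
     (\<forall>a\<in>Ob C. tno C (unit C) a = a \<and> tno C a (unit C) = a) \<and>
     (\<forall>f\<in>Mor C. \<forall>g\<in>Mor C. \<forall>h\<in>Mor C. tnm C (tnm C f g) h = tnm C f (tnm C g h)) \<and>
     (\<forall>f\<in>Mor C. tnm C (idm C (unit C)) f = f \<and> tnm C f (idm C (unit C)) = f) \<and>
     (\<forall>a\<in>Ob C. \<forall>b\<in>Ob C. tnm C (idm C a) (idm C b) = idm C (tno C a b)) \<and>
     (\<forall>a\<in>Ob C. \<forall>b\<in>Ob C. \<forall>c\<in>Ob C. \<forall>a'\<in>Ob C. \<forall>b'\<in>Ob C. \<forall>c'\<in>Ob C.
       \<forall>f\<in>Hom C a b. \<forall>g\<in>Hom C b c. \<forall>f'\<in>Hom C a' b'. \<forall>g'\<in>Hom C b' c'.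
         tnm C (cmp C g f) (cmp C g' f') = cmp C (tnm C g g') (tnm C f f'))"

definition is_Ab_category :: "('o, 'm) mcat \<Rightarrow> bool" where
  "is_Ab_category C \<longleftrightarrow>
     (\<forall>a\<in>Ob C. \<forall>b\<in>Ob C.
        mzero C a b \<in> Hom C a b \<and>
        (\<forall>f\<in>Hom C a b. \<forall>g\<in>Hom C a b. madd C f g \<in> Hom C a b) \<and>
        (\<forall>f\<in>Hom C a b. mneg C f \<in> Hom C a b) \<and>
        (\<forall>f\<in>Hom C a b. \<forall>g\<in>Hom C a b. \<forall>h\<in>Hom C a b.
            madd C (madd C f g) h = madd C f (madd C g h)) \<and>
        (\<forall>f\<in>Hom C a b. \<forall>g\<in>Hom C a b. madd C f g = madd C g f) \<and>
        (\<forall>f\<in>Hom C a b. madd C (mzero C a b) f = f) \<and>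
        (\<forall>f\<in>Hom C a b. madd C (mneg C f) f = mzero C a b)) \<and>
     (\<forall>a\<in>Ob C. \<forall>b\<in>Ob C. \<forall>c\<in>Ob C. \<forall>f\<in>Hom C a b. \<forall>f'\<in>Hom C a b. \<forall>g\<in>Hom C b c. \<forall>g'\<in>Hom C b c.
        cmp C (madd C g g') f = madd C (cmp C g f) (cmp C g' f) \<and>
        cmp C g (madd C f f') = madd C (cmp C g f) (cmp C g f')) \<and>
     (\<forall>a\<in>Ob C. \<forall>b\<in>Ob C. \<forall>c\<in>Ob C. \<forall>e\<in>Ob C. \<forall>f\<in>Hom C a b. \<forall>f'\<in>Hom C a b. \<forall>g\<in>Hom C c e. \<forall>g'\<in>Hom C c e.
        tnm C (madd C f f') g = madd C (tnm C f g) (tnm C f' g) \<and>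
        tnm C f (madd C g g') = madd C (tnm C f g) (tnm C f g'))"

text \<open>The ground ring k = End(unit) (addition madd, multiplication cmp) is a field,
and the tensor product is k-bilinear for the action  k f = k \<boxtimes> f.\<close>

definition ground_field :: "('o, 'm) mcat \<Rightarrow> bool" where
  "ground_field C \<longleftrightarrow>
     idm C (unit C) \<noteq> mzero C (unit C) (unit C) \<and>
     (\<forall>k\<in>Hom C (unit C) (unit C). \<forall>l\<in>Hom C (unit C) (unit C). cmp C k l = cmp C l k) \<and>
     (\<forall>k\<in>Hom C (unit C) (unit C). k \<noteq> mzero C (unit C) (unit C) \<longrightarrow>
         (\<exists>l\<in>Hom C (unit C) (unit C). cmp C l k = idm C (unit C)))"

definition k_bilinear_tensor :: "('o, 'm) mcat \<Rightarrow> bool" where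
  "k_bilinear_tensor C \<longleftrightarrow>
     (\<forall>k\<in>Hom C (unit C) (unit C). \<forall>f\<in>Mor C. \<forall>g\<in>Mor C.
        tnm C (tnm C k f) g = tnm C k (tnm C f g) \<and>
        tnm C f (tnm C k g) = tnm C k (tnm C f g))"

definition strict_monoidal_Ab_cat :: "('o, 'm) mcat \<Rightarrow> bool" where
  "strict_monoidal_Ab_cat C \<longleftrightarrow> is_category C \<and> is_strict_monoidal C \<and>
     is_Ab_category C \<and> ground_field C \<and> k_bilinear_tensor C"

text \<open>V is simple iff every endomorphism of V is k \<boxtimes> Id_V for a unique scalar k
(uniqueness is implicit in the paper's notation \<langle>f\<rangle>).\<close>

definition simple_obj :: "('o, 'm) mcat \<Rightarrow> 'o \<Rightarrow> bool" where
  "simple_obj C V \<longleftrightarrow> V \<in> Ob C \<and>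
     (\<forall>f\<in>Hom C V V. \<exists>!k. k \<in> Hom C (unit C) (unit C) \<and> f = tnm C k (idm C V))"

definition scal :: "('o, 'm) mcat \<Rightarrow> 'o \<Rightarrow> 'm \<Rightarrow> 'm" where
  "scal C V f = (THE k. k \<in> Hom C (unit C) (unit C) \<and> f = tnm C k (idm C V))"

fun msum_list :: "('o, 'm) mcat \<Rightarrow> 'o \<Rightarrow> 'o \<Rightarrow> 'm list \<Rightarrow> 'm" where
  "msum_list C a b [] = mzero C a b"
| "msum_list C a b (f # fs) = madd C f (msum_list C a b fs)"

definition psi_system ::
  "('o, 'm) mcat \<Rightarrow> 'i set \<Rightarrow> ('i \<Rightarrow> 'o) \<Rightarrow> ('i \<Rightarrow> 'i) \<Rightarrow> ('i \<Rightarrow> 'm) \<Rightarrow> ('i \<Rightarrow> 'm) \<Rightarrow> bool" where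
  "psi_system C I V st b d \<longleftrightarrow>
     strict_monoidal_Ab_cat C \<and>
     (\<forall>i\<in>I. simple_obj C (V i)) \<and>
     (\<forall>i\<in>I. \<forall>j\<in>I. i \<noteq> j \<longrightarrow> Hom C (V i) (V j) = {mzero C (V i) (V j)}) \<and>
     (\<forall>i\<in>I. st i \<in> I \<and> st (st i) = i) \<and>
     (\<forall>i\<in>I. b i \<in> Hom C (unit C) (tno C (V i) (V (st i))) \<and>
             d i \<in> Hom C (tno C (V i) (V (st i))) (unit C)) \<and>
     (\<forall>i\<in>I. cmp C (tnm C (idm C (V i)) (d (st i))) (tnm C (b i) (idm C (V i))) = idm C (V i) \<and>
             cmp C (tnm C (d i) (idm C (V i))) (tnm C (idm C (V i)) (b (st i))) = idm C (V i)) \<and>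
     (\<forall>i\<in>I. \<forall>j\<in>I.
        (\<exists>k\<in>I. Hom C (V k) (tno C (V i) (V j)) \<noteq> {mzero C (V k) (tno C (V i) (V j))}) \<longrightarrow>
        (\<exists>ps :: ('i \<times> 'm \<times> 'm) list.
           (\<forall>(k, x, y)\<in>set ps. k \<in> I \<and> x \<in> Hom C (V k) (tno C (V i) (V j)) \<and>
                                y \<in> Hom C (tno C (V i) (V j)) (V k)) \<and>
           idm C (tno C (V i) (V j)) =
             msum_list C (tno C (V i) (V j)) (tno C (V i) (V j))
               (map (\<lambda>(k, x, y). cmp C x y) ps)))"

text \<open>An element of H = \<Oplus> H^k_ij \<oplus> \<Oplus> H^ij_k is a pair (hat, check) of families
indexed by (i,j,k) \<in> I^3: hat i j k = \<pi>^k_ij x \<in> Hom(V_i \<boxtimes> V_j, V_k) and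
check i j k = \<pi>^ij_k x \<in> Hom(V_k, V_i \<boxtimes> V_j), with finitely many nonzero components
(canonically undefined outside I^3).\<close>

type_synonym ('i, 'm) Helem = "('i \<Rightarrow> 'i \<Rightarrow> 'i \<Rightarrow> 'm) \<times> ('i \<Rightarrow> 'i \<Rightarrow> 'i \<Rightarrow> 'm)"

definition pihat :: "('i, 'm) Helem \<Rightarrow> 'i \<Rightarrow> 'i \<Rightarrow> 'i \<Rightarrow> 'm" where
  "pihat x i j k = fst x i j k"

definition picheck :: "('i, 'm) Helem \<Rightarrow> 'i \<Rightarrow> 'i \<Rightarrow> 'i \<Rightarrow> 'm" where
  "picheck x i j k = snd x i j k"

definition Hspace :: "('o, 'm) mcat \<Rightarrow> 'i set \<Rightarrow> ('i \<Rightarrow> 'o) \<Rightarrow> ('i, 'm) Helem set" where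
  "Hspace C I V = {x.
     (\<forall>i\<in>I. \<forall>j\<in>I. \<forall>k\<in>I. pihat x i j k \<in> Hom C (tno C (V i) (V j)) (V k) \<and>
                          picheck x i j k \<in> Hom C (V k) (tno C (V i) (V j))) \<and>
     (\<forall>i j k. \<not> (i \<in> I \<and> j \<in> I \<and> k \<in> I) \<longrightarrow>
                 pihat x i j k = undefined \<and> picheck x i j k = undefined) \<and>
     finite {(i, j, k). i \<in> I \<and> j \<in> I \<and> k \<in> I \<and>
                        pihat x i j k \<noteq> mzero C (tno C (V i) (V j)) (V k)} \<and>
     finite {(i, j, k). i \<in> I \<and> j \<in> I \<and> k \<in> I \<and>
                        picheck x i j k \<noteq> mzero C (V k) (tno C (V i) (V j))}}"

definition ksum :: "('o, 'm) mcat \<Rightarrow> ('a \<Rightarrow> 'm) \<Rightarrow> 'a set \<Rightarrow> 'm" where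
  "ksum C f S = Finite_Set.fold (\<lambda>a acc. madd C (f a) acc) (mzero C (unit C) (unit C))
                  {a \<in> S. f a \<noteq> mzero C (unit C) (unit C)}"

text \<open>Each summand of the defining sums lies in a single
component of H; we record the resulting components. The summand indexed by (i,j,k)
of A lands in H^{i* k}_j (first term) resp. H^j_{i* k} (second term); that of B in
H^{k j*}_i resp. H^i_{k j*}.\<close>

definition opA :: "('o, 'm) mcat \<Rightarrow> 'i set \<Rightarrow> ('i \<Rightarrow> 'o) \<Rightarrow> ('i \<Rightarrow> 'i) \<Rightarrow> ('i \<Rightarrow> 'm) \<Rightarrow> ('i \<Rightarrow> 'm)
                      \<Rightarrow> ('i, 'm) Helem \<Rightarrow> ('i, 'm) Helem" where
  "opA C I V st b d x =
     ((\<lambda>p q r. if p \<in> I \<and> q \<in> I \<and> r \<in> I then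
          cmp C (tnm C (d p) (idm C (V r))) (tnm C (idm C (V p)) (picheck x (st p) r q))
        else undefined),
      (\<lambda>p q r. if p \<in> I \<and> q \<in> I \<and> r \<in> I then
          cmp C (tnm C (idm C (V p)) (pihat x (st p) r q)) (tnm C (b p) (idm C (V r)))
        else undefined))"

definition opB :: "('o, 'm) mcat \<Rightarrow> 'i set \<Rightarrow> ('i \<Rightarrow> 'o) \<Rightarrow> ('i \<Rightarrow> 'i) \<Rightarrow> ('i \<Rightarrow> 'm) \<Rightarrow> ('i \<Rightarrow> 'm)
                      \<Rightarrow> ('i, 'm) Helem \<Rightarrow> ('i, 'm) Helem" where
  "opB C I V st b d x =
     ((\<lambda>p q r. if p \<in> I \<and> q \<in> I \<and> r \<in> I then
          cmp C (tnm C (idm C (V r)) (d (st q))) (tnm C (picheck x r (st q) p) (idm C (V q)))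
        else undefined),
      (\<lambda>p q r. if p \<in> I \<and> q \<in> I \<and> r \<in> I then
          cmp C (tnm C (pihat x r (st q) p) (idm C (V q))) (tnm C (idm C (V r)) (b (st q)))
        else undefined))"

definition hform :: "('o, 'm) mcat \<Rightarrow> 'i set \<Rightarrow> ('i \<Rightarrow> 'o) \<Rightarrow> ('i, 'm) Helem \<Rightarrow> ('i, 'm) Helem \<Rightarrow> 'm" where
  "hform C I V x y = ksum C (\<lambda>(i, j, k).
       madd C (scal C (V k) (cmp C (pihat x i j k) (picheck y i j k)))
              (scal C (V k) (cmp C (pihat y i j k) (picheck x i j k))))
     (I \<times> I \<times> I)"

definition transp :: "('o, 'm) mcat \<Rightarrow> 'i set \<Rightarrow> ('i \<Rightarrow> 'o)
                       \<Rightarrow> (('i, 'm) Helem \<Rightarrow> ('i, 'm) Helem) \<Rightarrow> ('i, 'm) Helem \<Rightarrow> ('i, 'm) Helem" where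
  "transp C I V f y = (THE z. z \<in> Hspace C I V \<and>
       (\<forall>x\<in>Hspace C I V. hform C I V (f x) y = hform C I V x z))"

text \<open>The linear forms T and T-bar, evaluated on pure tensors u \<otimes> v \<otimes> x \<otimes> y.\<close>

definition Tform :: "('o, 'm) mcat \<Rightarrow> 'i set \<Rightarrow> ('i \<Rightarrow> 'o)
     \<Rightarrow> ('i, 'm) Helem \<Rightarrow> ('i, 'm) Helem \<Rightarrow> ('i, 'm) Helem \<Rightarrow> ('i, 'm) Helem \<Rightarrow> 'm" where
  "Tform C I V u v x y = ksum C (\<lambda>(i, j, k, l, m, n).
       scal C (V m)
         (cmp C (pihat u k l m)
           (cmp C (tnm C (pihat v i j k) (idm C (V l)))
             (cmp C (tnm C (idm C (V i)) (picheck x j l n))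
               (picheck y i n m)))))
     (I \<times> I \<times> I \<times> I \<times> I \<times> I)"

definition Tbar :: "('o, 'm) mcat \<Rightarrow> 'i set \<Rightarrow> ('i \<Rightarrow> 'o)
     \<Rightarrow> ('i, 'm) Helem \<Rightarrow> ('i, 'm) Helem \<Rightarrow> ('i, 'm) Helem \<Rightarrow> ('i, 'm) Helem \<Rightarrow> 'm" where
  "Tbar C I V u v x y = ksum C (\<lambda>(i, j, k, l, m, n).
       scal C (V m)
         (cmp C (pihat u i n m)
           (cmp C (tnm C (idm C (V i)) (pihat v j l n))
             (cmp C (tnm C (picheck x i j k) (idm C (V l)))
               (picheck y k l m)))))
     (I \<times> I \<times> I \<times> I \<times> I \<times> I)"

end

theory Submission
  imports Defs
begin

text \<open>
  Each identity is proved summand by summand, after relabelling the six summation indices by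
  an involution of \<open>I\<^sup>6\<close>; every summand identity is a string-diagram computation.
  Identity (ii) needs only the diagram calculus: the unit \<open>b (st j)\<close> inside \<open>Bx\<close> and the counit
  \<open>d j\<close> inside \<open>Av\<close> cancel by a zigzag identity. Identities (i) and (iii) involve the transposes.
  The form on \<open>H\<close> pairs \<open>H\<^sup>k\<^sub>i\<^sub>j\<close> with \<open>H\<^sup>i\<^sup>j\<^sub>k\<close> by \<open>(f, c) \<mapsto> \<langle>f \<cdot> c\<rangle>\<close>; using axiom (4) and duality this
  pairing is nondegenerate and represents every linear form. Hence the transpose of \<open>A\<close> (or \<open>B\<close>)
  at \<open>y\<close> is the vector whose components represent the linear forms through which the components
  of \<open>x\<close> enter \<open>\<langle>A x, y\<rangle>\<close>; its defining property turns a summand of \<open>Tform\<close> into an expression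
  in \<open>y\<close>, which the diagram calculus identifies with a summand of \<open>Tbar\<close>.
\<close>

locale psi_sys =
  fixes C :: "('o, 'm) mcat" and I :: "'i set" and V :: "'i \<Rightarrow> 'o"
    and st :: "'i \<Rightarrow> 'i" and b d :: "'i \<Rightarrow> 'm"
  assumes psi: "psi_system C I V st b d"
begin

abbreviation comp_C :: "'m \<Rightarrow> 'm \<Rightarrow> 'm" (infixr "\<cdot>" 70) where "g \<cdot> f \<equiv> cmp C g f"
abbreviation tensor_C :: "'m \<Rightarrow> 'm \<Rightarrow> 'm" (infixr "\<otimes>" 75) where "f \<otimes> g \<equiv> tnm C f g"
abbreviation otensor_C :: "'o \<Rightarrow> 'o \<Rightarrow> 'o" (infixr "\<odot>" 75) where "a \<odot> c \<equiv> tno C a c"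
abbreviation ident_C :: "'o \<Rightarrow> 'm" ("\<one>") where "\<one> a \<equiv> idm C a"
abbreviation unit_C :: "'o" ("\<bbbI>") where "\<bbbI> \<equiv> unit C"
abbreviation add_C :: "'m \<Rightarrow> 'm \<Rightarrow> 'm" (infixl "\<oplus>" 65) where "f \<oplus> g \<equiv> madd C f g"
abbreviation zero_C :: "'o \<Rightarrow> 'o \<Rightarrow> 'm" ("\<zero>") where "\<zero> a c \<equiv> mzero C a c"
abbreviation scal_C :: "'m \<Rightarrow> 'i \<Rightarrow> 'm" ("\<langle>_\<rangle>\<^bsub>_\<^esub>") where "\<langle>f\<rangle>\<^bsub>k\<^esub> \<equiv> scal C (V k) f"
abbreviation field_C :: "'m set" ("\<kk>") where "\<kk> \<equiv> Hom C \<bbbI> \<bbbI>"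

lemma Hom_iff [simp]: "f \<in> Hom C a c \<longleftrightarrow> f \<in> Mor C \<and> dom C f = a \<and> cod C f = c"
  by (auto simp: Hom_def)

lemma category: "is_category C" and monoidal: "is_strict_monoidal C"
  and additive: "is_Ab_category C" and ground: "ground_field C" and bilinear: "k_bilinear_tensor C"
  using psi unfolding psi_system_def strict_monoidal_Ab_cat_def by auto

lemma dom_ob [simp]: "f \<in> Mor C \<Longrightarrow> dom C f \<in> Ob C"
  and cod_ob [simp]: "f \<in> Mor C \<Longrightarrow> cod C f \<in> Ob C"
  and unit_ob [simp]: "\<bbbI> \<in> Ob C"
  and tno_ob [simp]: "a \<in> Ob C \<Longrightarrow> c \<in> Ob C \<Longrightarrow> a \<odot> c \<in> Ob C"
  and tno_assoc [simp]: "a \<in> Ob C \<Longrightarrow> c \<in> Ob C \<Longrightarrow> e \<in> Ob C \<Longrightarrow> (a \<odot> c) \<odot> e = a \<odot> (c \<odot> e)"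
  and tno_unit_left [simp]: "a \<in> Ob C \<Longrightarrow> \<bbbI> \<odot> a = a"
  and tno_unit_right [simp]: "a \<in> Ob C \<Longrightarrow> a \<odot> \<bbbI> = a"
  using category monoidal unfolding is_category_def is_strict_monoidal_def by auto

lemma V_ob [simp]: "i \<in> I \<Longrightarrow> V i \<in> Ob C"
  and dual_in_I [simp]: "i \<in> I \<Longrightarrow> st i \<in> I"
  and dual_dual [simp]: "i \<in> I \<Longrightarrow> st (st i) = i"
  using psi unfolding psi_system_def simple_obj_def by auto

lemma dual_inj: "i \<in> I \<Longrightarrow> j \<in> I \<Longrightarrow> st i = st j \<Longrightarrow> i = j"
  by (metis dual_dual)

lemma idm_typing [simp]: "a \<in> Ob C \<Longrightarrow> \<one> a \<in> Mor C" "a \<in> Ob C \<Longrightarrow> dom C (\<one> a) = a"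
    "a \<in> Ob C \<Longrightarrow> cod C (\<one> a) = a"
  using category unfolding is_category_def by auto

lemma cmp_typing [simp]:
  assumes "f \<in> Mor C" "g \<in> Mor C" "dom C g = cod C f"
  shows "g \<cdot> f \<in> Mor C" "dom C (g \<cdot> f) = dom C f" "cod C (g \<cdot> f) = cod C g"
proof -
  have "\<forall>a\<in>Ob C. \<forall>b\<in>Ob C. \<forall>c\<in>Ob C. \<forall>f\<in>Hom C a b. \<forall>g\<in>Hom C b c. g \<cdot> f \<in> Hom C a c"
    using category unfolding is_category_def by blast
  from this[rule_format, of "dom C f" "cod C f" "cod C g" f g] assms
  show "g \<cdot> f \<in> Mor C" "dom C (g \<cdot> f) = dom C f" "cod C (g \<cdot> f) = cod C g" by auto
qed

lemma tnm_typing [simp]: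
  assumes "f \<in> Mor C" "g \<in> Mor C"
  shows "f \<otimes> g \<in> Mor C" "dom C (f \<otimes> g) = dom C f \<odot> dom C g" "cod C (f \<otimes> g) = cod C f \<odot> cod C g"
proof -
  have "\<forall>a\<in>Ob C. \<forall>b\<in>Ob C. \<forall>c\<in>Ob C. \<forall>e\<in>Ob C. \<forall>f\<in>Hom C a b. \<forall>g\<in>Hom C c e.
      f \<otimes> g \<in> Hom C (a \<odot> c) (b \<odot> e)"
    using monoidal[unfolded is_strict_monoidal_def] by (elim conjE) assumption
  from this[rule_format, of "dom C f" "cod C f" "dom C g" "cod C g" f g] assms
  show "f \<otimes> g \<in> Mor C" "dom C (f \<otimes> g) = dom C f \<odot> dom C g"
    "cod C (f \<otimes> g) = cod C f \<odot> cod C g" by auto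
qed

lemma cmp_assoc [simp]:
  assumes "f \<in> Mor C" "g \<in> Mor C" "h \<in> Mor C" "dom C g = cod C f" "dom C h = cod C g"
  shows "(h \<cdot> g) \<cdot> f = h \<cdot> g \<cdot> f"
proof -
  have "\<forall>a\<in>Ob C. \<forall>b\<in>Ob C. \<forall>c\<in>Ob C. \<forall>e\<in>Ob C. \<forall>f\<in>Hom C a b. \<forall>g\<in>Hom C b c. \<forall>h\<in>Hom C c e.
      h \<cdot> g \<cdot> f = (h \<cdot> g) \<cdot> f"
    using category unfolding is_category_def by blast
  from this[rule_format, of "dom C f" "cod C f" "cod C g" "cod C h" f g h] assms show ?thesis by auto
qed

lemma cmp_id_right [simp]: "f \<in> Mor C \<Longrightarrow> a = dom C f \<Longrightarrow> f \<cdot> \<one> a = f"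
  and cmp_id_left [simp]: "f \<in> Mor C \<Longrightarrow> a = cod C f \<Longrightarrow> \<one> a \<cdot> f = f"
proof -
  have ax: "\<forall>a\<in>Ob C. \<forall>b\<in>Ob C. \<forall>f\<in>Hom C a b. f \<cdot> \<one> a = f \<and> \<one> b \<cdot> f = f"
    using category[unfolded is_category_def] by (elim conjE) assumption
  show "f \<in> Mor C \<Longrightarrow> a = dom C f \<Longrightarrow> f \<cdot> \<one> a = f"
    using ax[rule_format, of "dom C f" "cod C f" f] by simp
  show "f \<in> Mor C \<Longrightarrow> a = cod C f \<Longrightarrow> \<one> a \<cdot> f = f"
    using ax[rule_format, of "dom C f" "cod C f" f] by simp
qed

lemma tnm_assoc [simp]: "f \<in> Mor C \<Longrightarrow> g \<in> Mor C \<Longrightarrow> h \<in> Mor C \<Longrightarrow> (f \<otimes> g) \<otimes> h = f \<otimes> g \<otimes> h"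
  and tnm_unit_left [simp]: "f \<in> Mor C \<Longrightarrow> \<one> \<bbbI> \<otimes> f = f"
  and tnm_unit_right [simp]: "f \<in> Mor C \<Longrightarrow> f \<otimes> \<one> \<bbbI> = f"
  and tnm_id_id [simp]: "a \<in> Ob C \<Longrightarrow> c \<in> Ob C \<Longrightarrow> \<one> a \<otimes> \<one> c = \<one> (a \<odot> c)"
  using monoidal unfolding is_strict_monoidal_def by auto

lemma interchange:
  assumes "f \<in> Mor C" "g \<in> Mor C" "f' \<in> Mor C" "g' \<in> Mor C" "dom C g = cod C f" "dom C g' = cod C f'"
  shows "(g \<cdot> f) \<otimes> (g' \<cdot> f') = (g \<otimes> g') \<cdot> (f \<otimes> f')"
proof -
  have "\<forall>a\<in>Ob C. \<forall>b\<in>Ob C. \<forall>c\<in>Ob C. \<forall>a'\<in>Ob C. \<forall>b'\<in>Ob C. \<forall>c'\<in>Ob C.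
      \<forall>f\<in>Hom C a b. \<forall>g\<in>Hom C b c. \<forall>f'\<in>Hom C a' b'. \<forall>g'\<in>Hom C b' c'.
        (g \<cdot> f) \<otimes> (g' \<cdot> f') = (g \<otimes> g') \<cdot> (f \<otimes> f')"
    using monoidal[unfolded is_strict_monoidal_def] by (elim conjE) assumption
  from this[rule_format, of "dom C f" "cod C f" "cod C g" "dom C f'" "cod C f'" "cod C g'" f g f' g']
  show ?thesis using assms by auto
qed

lemma hom_group: "a \<in> Ob C \<Longrightarrow> c \<in> Ob C \<Longrightarrow> \<zero> a c \<in> Hom C a c \<and>
    (\<forall>f\<in>Hom C a c. \<forall>g\<in>Hom C a c. f \<oplus> g \<in> Hom C a c) \<and>
    (\<forall>f\<in>Hom C a c. mneg C f \<in> Hom C a c) \<and>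
    (\<forall>f\<in>Hom C a c. \<forall>g\<in>Hom C a c. \<forall>h\<in>Hom C a c. f \<oplus> g \<oplus> h = f \<oplus> (g \<oplus> h)) \<and>
    (\<forall>f\<in>Hom C a c. \<forall>g\<in>Hom C a c. f \<oplus> g = g \<oplus> f) \<and>
    (\<forall>f\<in>Hom C a c. \<zero> a c \<oplus> f = f) \<and>
    (\<forall>f\<in>Hom C a c. mneg C f \<oplus> f = \<zero> a c)"
  using additive[unfolded is_Ab_category_def] by (elim conjE) blast

lemma zero_typing [simp]: "a \<in> Ob C \<Longrightarrow> c \<in> Ob C \<Longrightarrow> \<zero> a c \<in> Mor C"
    "a \<in> Ob C \<Longrightarrow> c \<in> Ob C \<Longrightarrow> dom C (\<zero> a c) = a"
    "a \<in> Ob C \<Longrightarrow> c \<in> Ob C \<Longrightarrow> cod C (\<zero> a c) = c"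
  using hom_group by auto

lemma add_typing [simp]:
  assumes "f \<in> Mor C" "g \<in> Mor C" "dom C g = dom C f" "cod C g = cod C f"
  shows "f \<oplus> g \<in> Mor C" "dom C (f \<oplus> g) = dom C f" "cod C (f \<oplus> g) = cod C f"
  using hom_group[of "dom C f" "cod C f"] assms by auto

lemma add_assoc: "f \<in> Mor C \<Longrightarrow> g \<in> Hom C (dom C f) (cod C f) \<Longrightarrow> h \<in> Hom C (dom C f) (cod C f)
    \<Longrightarrow> f \<oplus> g \<oplus> h = f \<oplus> (g \<oplus> h)"
  and add_comm: "f \<in> Mor C \<Longrightarrow> g \<in> Hom C (dom C f) (cod C f) \<Longrightarrow> f \<oplus> g = g \<oplus> f"
  and add_zero_left [simp]: "f \<in> Mor C \<Longrightarrow> a = dom C f \<Longrightarrow> c = cod C f \<Longrightarrow> \<zero> a c \<oplus> f = f"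
  using hom_group[of "dom C f" "cod C f"] by auto

lemma add_zero_right [simp]: "f \<in> Mor C \<Longrightarrow> a = dom C f \<Longrightarrow> c = cod C f \<Longrightarrow> f \<oplus> \<zero> a c = f"
  using add_comm[of f "\<zero> a c"] by simp

text \<open>In a group the only idempotent is the neutral element; this is how we show that
  additive maps send zero to zero.\<close>

lemma idempotent_is_zero: assumes "f \<in> Mor C" "f \<oplus> f = f" shows "f = \<zero> (dom C f) (cod C f)"
proof -
  let ?n = "mneg C f"
  have n: "?n \<in> Hom C (dom C f) (cod C f)" "?n \<oplus> f = \<zero> (dom C f) (cod C f)"
    using hom_group[of "dom C f" "cod C f"] assms(1) by auto
  have "\<zero> (dom C f) (cod C f) = ?n \<oplus> (f \<oplus> f)" using n assms by simp
  also have "\<dots> = (?n \<oplus> f) \<oplus> f" by (rule add_assoc[symmetric]) (use n assms in auto)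
  also have "\<dots> = f" using n assms by simp
  finally show ?thesis by (rule sym)
qed

lemma cmp_add:
  assumes "f \<in> Mor C" "g \<in> Mor C" "dom C g = cod C f"
  shows cmp_add_left: "g' \<in> Hom C (dom C g) (cod C g) \<Longrightarrow> (g \<oplus> g') \<cdot> f = g \<cdot> f \<oplus> g' \<cdot> f"
    and cmp_add_right: "f' \<in> Hom C (dom C f) (cod C f) \<Longrightarrow> g \<cdot> (f \<oplus> f') = g \<cdot> f \<oplus> g \<cdot> f'"
proof -
  have ax: "\<forall>a\<in>Ob C. \<forall>b\<in>Ob C. \<forall>c\<in>Ob C. \<forall>f\<in>Hom C a b. \<forall>f'\<in>Hom C a b. \<forall>g\<in>Hom C b c.
      \<forall>g'\<in>Hom C b c. (g \<oplus> g') \<cdot> f = g \<cdot> f \<oplus> g' \<cdot> f \<and> g \<cdot> (f \<oplus> f') = g \<cdot> f \<oplus> g \<cdot> f'"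
    using additive[unfolded is_Ab_category_def] by (elim conjE) assumption
  show "g' \<in> Hom C (dom C g) (cod C g) \<Longrightarrow> (g \<oplus> g') \<cdot> f = g \<cdot> f \<oplus> g' \<cdot> f"
    using ax[rule_format, of "dom C f" "cod C f" "cod C g" f f g g'] assms by auto
  show "f' \<in> Hom C (dom C f) (cod C f) \<Longrightarrow> g \<cdot> (f \<oplus> f') = g \<cdot> f \<oplus> g \<cdot> f'"
    using ax[rule_format, of "dom C f" "cod C f" "cod C g" f f' g g] assms by auto
qed

lemma tnm_add:
  assumes "f \<in> Mor C" "g \<in> Mor C"
  shows tnm_add_left: "f' \<in> Hom C (dom C f) (cod C f) \<Longrightarrow> (f \<oplus> f') \<otimes> g = f \<otimes> g \<oplus> f' \<otimes> g"
    and tnm_add_right: "g' \<in> Hom C (dom C g) (cod C g) \<Longrightarrow> f \<otimes> (g \<oplus> g') = f \<otimes> g \<oplus> f \<otimes> g'"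
proof -
  have ax: "\<forall>a\<in>Ob C. \<forall>b\<in>Ob C. \<forall>c\<in>Ob C. \<forall>e\<in>Ob C. \<forall>f\<in>Hom C a b. \<forall>f'\<in>Hom C a b. \<forall>g\<in>Hom C c e.
      \<forall>g'\<in>Hom C c e. (f \<oplus> f') \<otimes> g = f \<otimes> g \<oplus> f' \<otimes> g \<and> f \<otimes> (g \<oplus> g') = f \<otimes> g \<oplus> f \<otimes> g'"
    using additive[unfolded is_Ab_category_def] by (elim conjE) assumption
  show "f' \<in> Hom C (dom C f) (cod C f) \<Longrightarrow> (f \<oplus> f') \<otimes> g = f \<otimes> g \<oplus> f' \<otimes> g"
    using ax[rule_format, of "dom C f" "cod C f" "dom C g" "cod C g" f f' g g] assms by auto
  show "g' \<in> Hom C (dom C g) (cod C g) \<Longrightarrow> f \<otimes> (g \<oplus> g') = f \<otimes> g \<oplus> f \<otimes> g'"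
    using ax[rule_format, of "dom C f" "cod C f" "dom C g" "cod C g" f f g g'] assms by auto
qed

lemma cmp_zero_right [simp]: assumes "g \<in> Mor C" "a \<in> Ob C" "c = dom C g"
  shows "g \<cdot> \<zero> a c = \<zero> a (cod C g)"
proof -
  have "g \<cdot> \<zero> a c = g \<cdot> (\<zero> a c \<oplus> \<zero> a c)" using assms by simp
  also have "\<dots> = g \<cdot> \<zero> a c \<oplus> g \<cdot> \<zero> a c" using assms by (intro cmp_add_right) auto
  finally show ?thesis using idempotent_is_zero[of "g \<cdot> \<zero> a c"] assms by simp
qed

lemma cmp_zero_left [simp]: assumes "f \<in> Mor C" "e \<in> Ob C" "c = cod C f"
  shows "\<zero> c e \<cdot> f = \<zero> (dom C f) e"
proof -
  have "\<zero> c e \<cdot> f = (\<zero> c e \<oplus> \<zero> c e) \<cdot> f" using assms by simp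
  also have "\<dots> = \<zero> c e \<cdot> f \<oplus> \<zero> c e \<cdot> f" using assms by (intro cmp_add_left) auto
  finally show ?thesis using idempotent_is_zero[of "\<zero> c e \<cdot> f"] assms by simp
qed

lemma tnm_zero_right [simp]: assumes "f \<in> Mor C" "a \<in> Ob C" "c \<in> Ob C"
  shows "f \<otimes> \<zero> a c = \<zero> (dom C f \<odot> a) (cod C f \<odot> c)"
proof -
  have "f \<otimes> \<zero> a c = f \<otimes> (\<zero> a c \<oplus> \<zero> a c)" using assms by simp
  also have "\<dots> = f \<otimes> \<zero> a c \<oplus> f \<otimes> \<zero> a c" using assms by (intro tnm_add_right) auto
  finally show ?thesis using idempotent_is_zero[of "f \<otimes> \<zero> a c"] assms by simp
qed

lemma tnm_zero_left [simp]: assumes "f \<in> Mor C" "a \<in> Ob C" "c \<in> Ob C"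
  shows "\<zero> a c \<otimes> f = \<zero> (a \<odot> dom C f) (c \<odot> cod C f)"
proof -
  have "\<zero> a c \<otimes> f = (\<zero> a c \<oplus> \<zero> a c) \<otimes> f" using assms by simp
  also have "\<dots> = \<zero> a c \<otimes> f \<oplus> \<zero> a c \<otimes> f" using assms by (intro tnm_add_left) auto
  finally show ?thesis using idempotent_is_zero[of "\<zero> a c \<otimes> f"] assms by simp
qed

lemma scalar_tnm_is_cmp: "s \<in> \<kk> \<Longrightarrow> t \<in> \<kk> \<Longrightarrow> s \<otimes> t = s \<cdot> t"
  using interchange[of "\<one> \<bbbI>" s t "\<one> \<bbbI>"] by simp

lemma scalar_cmp_left: "s \<in> \<kk> \<Longrightarrow> f \<in> Mor C \<Longrightarrow> g \<in> Mor C \<Longrightarrow> dom C g = cod C f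
    \<Longrightarrow> (s \<otimes> g) \<cdot> f = s \<otimes> (g \<cdot> f)"
  and scalar_cmp_right: "s \<in> \<kk> \<Longrightarrow> f \<in> Mor C \<Longrightarrow> g \<in> Mor C \<Longrightarrow> dom C g = cod C f
    \<Longrightarrow> g \<cdot> (s \<otimes> f) = s \<otimes> (g \<cdot> f)"
  using interchange[of "\<one> \<bbbI>" s f g] interchange[of s "\<one> \<bbbI>" f g] by simp_all

lemma scalar_tnm_right: assumes "s \<in> \<kk>" "f \<in> Mor C" "g \<in> Mor C" shows "f \<otimes> (s \<otimes> g) = s \<otimes> (f \<otimes> g)"
proof -
  have "\<forall>k\<in>\<kk>. \<forall>f\<in>Mor C. \<forall>g\<in>Mor C. f \<otimes> (k \<otimes> g) = k \<otimes> (f \<otimes> g)"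
    using bilinear unfolding k_bilinear_tensor_def by blast
  with assms show ?thesis by blast
qed

lemma scalar_mult: "s \<in> \<kk> \<Longrightarrow> t \<in> \<kk> \<Longrightarrow> f \<in> Mor C \<Longrightarrow> s \<otimes> (t \<otimes> f) = (s \<cdot> t) \<otimes> f"
  using scalar_tnm_is_cmp[of s t] tnm_assoc[of s t f] by simp

lemma scalar_comm: "s \<in> \<kk> \<Longrightarrow> t \<in> \<kk> \<Longrightarrow> s \<cdot> t = t \<cdot> s"
  using ground unfolding ground_field_def by auto

lemma scal_spec:
  assumes "i \<in> I" "f \<in> Hom C (V i) (V i)"
  shows "\<langle>f\<rangle>\<^bsub>i\<^esub> \<in> \<kk>" "f = \<langle>f\<rangle>\<^bsub>i\<^esub> \<otimes> \<one> (V i)"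
proof -
  have "\<exists>!k. k \<in> \<kk> \<and> f = k \<otimes> \<one> (V i)"
    using psi assms unfolding psi_system_def simple_obj_def by blast
  then have "\<langle>f\<rangle>\<^bsub>i\<^esub> \<in> \<kk> \<and> f = \<langle>f\<rangle>\<^bsub>i\<^esub> \<otimes> \<one> (V i)" unfolding scal_def by (rule theI')
  then show "\<langle>f\<rangle>\<^bsub>i\<^esub> \<in> \<kk>" "f = \<langle>f\<rangle>\<^bsub>i\<^esub> \<otimes> \<one> (V i)" by auto
qed

lemma scal_typing [simp]: "i \<in> I \<Longrightarrow> f \<in> Mor C \<Longrightarrow> dom C f = V i \<Longrightarrow> cod C f = V i \<Longrightarrow> \<langle>f\<rangle>\<^bsub>i\<^esub> \<in> Mor C"
    "i \<in> I \<Longrightarrow> f \<in> Mor C \<Longrightarrow> dom C f = V i \<Longrightarrow> cod C f = V i \<Longrightarrow> dom C \<langle>f\<rangle>\<^bsub>i\<^esub> = \<bbbI>"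
    "i \<in> I \<Longrightarrow> f \<in> Mor C \<Longrightarrow> dom C f = V i \<Longrightarrow> cod C f = V i \<Longrightarrow> cod C \<langle>f\<rangle>\<^bsub>i\<^esub> = \<bbbI>"
  using scal_spec(1)[of i f] by auto

lemma scal_unique: assumes "i \<in> I" "s \<in> \<kk>" "f = s \<otimes> \<one> (V i)" shows "\<langle>f\<rangle>\<^bsub>i\<^esub> = s"
proof -
  have "\<exists>!k. k \<in> \<kk> \<and> f = k \<otimes> \<one> (V i)"
    using psi assms unfolding psi_system_def simple_obj_def by auto
  then show ?thesis unfolding scal_def using assms by (intro the1_equality) auto
qed

lemma scal_zero [simp]: "i \<in> I \<Longrightarrow> \<langle>\<zero> (V i) (V i)\<rangle>\<^bsub>i\<^esub> = \<zero> \<bbbI> \<bbbI>"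
  by (rule scal_unique) simp_all

lemma scal_add:
  assumes "i \<in> I" "f \<in> Hom C (V i) (V i)" "g \<in> Hom C (V i) (V i)"
  shows "\<langle>f \<oplus> g\<rangle>\<^bsub>i\<^esub> = \<langle>f\<rangle>\<^bsub>i\<^esub> \<oplus> \<langle>g\<rangle>\<^bsub>i\<^esub>"
proof (rule scal_unique)
  have "f \<oplus> g = \<langle>f\<rangle>\<^bsub>i\<^esub> \<otimes> \<one> (V i) \<oplus> \<langle>g\<rangle>\<^bsub>i\<^esub> \<otimes> \<one> (V i)"
    using scal_spec(2)[OF assms(1,2)] scal_spec(2)[OF assms(1,3)] by simp
  also have "\<dots> = (\<langle>f\<rangle>\<^bsub>i\<^esub> \<oplus> \<langle>g\<rangle>\<^bsub>i\<^esub>) \<otimes> \<one> (V i)"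
    using assms by (intro tnm_add_left[symmetric]) auto
  finally show "f \<oplus> g = (\<langle>f\<rangle>\<^bsub>i\<^esub> \<oplus> \<langle>g\<rangle>\<^bsub>i\<^esub>) \<otimes> \<one> (V i)" .
qed (use assms in auto)

lemma scal_smult:
  assumes "i \<in> I" "s \<in> \<kk>" "f \<in> Hom C (V i) (V i)"
  shows "\<langle>s \<otimes> f\<rangle>\<^bsub>i\<^esub> = s \<cdot> \<langle>f\<rangle>\<^bsub>i\<^esub>"
proof (rule scal_unique)
  have "s \<otimes> f = s \<otimes> (\<langle>f\<rangle>\<^bsub>i\<^esub> \<otimes> \<one> (V i))" using scal_spec(2)[OF assms(1,3)] by simp
  also have "\<dots> = (s \<cdot> \<langle>f\<rangle>\<^bsub>i\<^esub>) \<otimes> \<one> (V i)"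
    using scal_spec(1)[OF assms(1,3)] assms by (intro scalar_mult) auto
  finally show "s \<otimes> f = (s \<cdot> \<langle>f\<rangle>\<^bsub>i\<^esub>) \<otimes> \<one> (V i)" .
qed (use assms scal_spec(1)[OF assms(1,3)] in auto)

lemma hom_distinct_zero:
  assumes "i \<in> I" "j \<in> I" "i \<noteq> j" "f \<in> Hom C (V i) (V j)"
  shows "f = \<zero> (V i) (V j)"
proof -
  have "\<forall>i\<in>I. \<forall>j\<in>I. i \<noteq> j \<longrightarrow> Hom C (V i) (V j) = {\<zero> (V i) (V j)}"
    using psi[unfolded psi_system_def] by (elim conjE) assumption
  with assms show ?thesis by blast
qed

lemma b_typing [simp]: "i \<in> I \<Longrightarrow> b i \<in> Mor C" "i \<in> I \<Longrightarrow> dom C (b i) = \<bbbI>"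
    "i \<in> I \<Longrightarrow> cod C (b i) = V i \<odot> V (st i)"
  and d_typing [simp]: "i \<in> I \<Longrightarrow> d i \<in> Mor C" "i \<in> I \<Longrightarrow> dom C (d i) = V i \<odot> V (st i)"
    "i \<in> I \<Longrightarrow> cod C (d i) = \<bbbI>"
  using psi unfolding psi_system_def by (auto simp del: Hom_iff simp: Hom_def)

lemma zigzag_left: "i \<in> I \<Longrightarrow> (\<one> (V i) \<otimes> d (st i)) \<cdot> (b i \<otimes> \<one> (V i)) = \<one> (V i)"
  and zigzag_right: "i \<in> I \<Longrightarrow> (d i \<otimes> \<one> (V i)) \<cdot> (\<one> (V i) \<otimes> b (st i)) = \<one> (V i)"
  using psi unfolding psi_system_def by blast+

text \<open>String-diagram calculus. Whiskering distributes over composition; together with the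
  strictness rules for \<open>\<otimes>\<close> this brings composites into a normal form in which the
  interchange law becomes the sliding rule below.\<close>

lemma whisker_left_cmp [simp]: "f \<in> Mor C \<Longrightarrow> g \<in> Mor C \<Longrightarrow> dom C g = cod C f \<Longrightarrow> a \<in> Ob C \<Longrightarrow>
    \<one> a \<otimes> (g \<cdot> f) = (\<one> a \<otimes> g) \<cdot> (\<one> a \<otimes> f)"
  using interchange[of "\<one> a" "\<one> a" f g] by simp

lemma whisker_right_cmp [simp]: "f \<in> Mor C \<Longrightarrow> g \<in> Mor C \<Longrightarrow> dom C g = cod C f \<Longrightarrow> a \<in> Ob C \<Longrightarrow>
    (g \<cdot> f) \<otimes> \<one> a = (g \<otimes> \<one> a) \<cdot> (f \<otimes> \<one> a)"
  using interchange[of f g "\<one> a" "\<one> a"] by simp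

lemma whisker_merge [simp]: "f \<in> Mor C \<Longrightarrow> a \<in> Ob C \<Longrightarrow> c \<in> Ob C \<Longrightarrow> \<one> a \<otimes> \<one> c \<otimes> f = \<one> (a \<odot> c) \<otimes> f"
  using tnm_assoc[of "\<one> a" "\<one> c" f] by simp

lemma cmp_prefix_eq:
  assumes "g \<cdot> f = g' \<cdot> f'" "f \<in> Mor C" "g \<in> Mor C" "f' \<in> Mor C" "g' \<in> Mor C" "r \<in> Mor C"
    "dom C g = cod C f" "dom C f = cod C r" "dom C g' = cod C f'" "dom C f' = cod C r"
  shows "g \<cdot> f \<cdot> r = g' \<cdot> f' \<cdot> r"
  using assms cmp_assoc[of r f g] cmp_assoc[of r f' g'] by simp

lemma slide: "f \<in> Mor C \<Longrightarrow> g \<in> Mor C \<Longrightarrow>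
    (\<one> (cod C f) \<otimes> g) \<cdot> (f \<otimes> \<one> (dom C g)) = (f \<otimes> \<one> (cod C g)) \<cdot> (\<one> (dom C f) \<otimes> g)"
  using interchange[of f "\<one> (cod C f)" "\<one> (dom C g)" g] interchange[of "\<one> (dom C f)" f g "\<one> (cod C g)"]
  by simp

lemma unit_slide_left: "e \<in> Hom C \<bbbI> E \<Longrightarrow> g \<in> Hom C X Y \<Longrightarrow> (\<one> E \<otimes> g) \<cdot> (e \<otimes> \<one> X) = (e \<otimes> \<one> Y) \<cdot> g"
  using slide[of e g] by simp

lemma unit_slide_right: "e \<in> Hom C \<bbbI> E \<Longrightarrow> g \<in> Hom C X Y \<Longrightarrow> (g \<otimes> \<one> E) \<cdot> (\<one> X \<otimes> e) = (\<one> Y \<otimes> e) \<cdot> g"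
  using slide[of g e] by simp

lemma mate_inverse:
  assumes \<epsilon>: "\<epsilon> \<in> Hom C (Q \<odot> P) \<bbbI>" and \<eta>: "\<eta> \<in> Hom C \<bbbI> (P \<odot> Q)"
    and zig: "(\<epsilon> \<otimes> \<one> Q) \<cdot> (\<one> Q \<otimes> \<eta>) = \<one> Q"
    and f: "f \<in> Hom C (Q \<odot> X) Y" and ob: "P \<in> Ob C" "Q \<in> Ob C" "X \<in> Ob C"
  shows "(\<epsilon> \<otimes> \<one> Y) \<cdot> (\<one> Q \<otimes> ((\<one> P \<otimes> f) \<cdot> (\<eta> \<otimes> \<one> X))) = f"
proof -
  have "Y \<in> Ob C" using f cod_ob by auto
  note typing = \<epsilon> \<eta> f ob this
  have "(\<epsilon> \<otimes> \<one> Y) \<cdot> (\<one> Q \<otimes> ((\<one> P \<otimes> f) \<cdot> (\<eta> \<otimes> \<one> X)))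
      = ((\<epsilon> \<otimes> \<one> Y) \<cdot> (\<one> (Q \<odot> P) \<otimes> f)) \<cdot> (\<one> Q \<otimes> \<eta> \<otimes> \<one> X)"
    using typing by simp
  also have "(\<epsilon> \<otimes> \<one> Y) \<cdot> (\<one> (Q \<odot> P) \<otimes> f) = f \<cdot> (\<epsilon> \<otimes> \<one> (Q \<odot> X))"
    using slide[of \<epsilon> f] typing by simp
  also have "(f \<cdot> (\<epsilon> \<otimes> \<one> (Q \<odot> X))) \<cdot> (\<one> Q \<otimes> \<eta> \<otimes> \<one> X)
      = f \<cdot> (((\<epsilon> \<otimes> \<one> Q) \<cdot> (\<one> Q \<otimes> \<eta>)) \<otimes> \<one> X)"
    using typing by simp
  also have "\<dots> = f \<cdot> (\<one> Q \<otimes> \<one> X)" by (simp only: zig)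
  finally show ?thesis using typing by simp
qed

text \<open>This is the diagrammatic core of identity (i).\<close>

lemma unit_through_composite:
  assumes e: "e \<in> Hom C \<bbbI> (W \<odot> A)" and v: "v \<in> Hom C (A \<odot> Bj) Bk"
    and u: "u \<in> Hom C (Bk \<odot> Bl) Bm" and x: "x \<in> Hom C Bn (Bj \<odot> Bl)"
    and ob: "W \<in> Ob C" "A \<in> Ob C" "Bj \<in> Ob C" "Bl \<in> Ob C"
  shows "(\<one> W \<otimes> (u \<cdot> (v \<otimes> \<one> Bl) \<cdot> (\<one> A \<otimes> x))) \<cdot> (e \<otimes> \<one> Bn)
       = (\<one> W \<otimes> u) \<cdot> (((\<one> W \<otimes> v) \<cdot> (e \<otimes> \<one> Bj)) \<otimes> \<one> Bl) \<cdot> x"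
proof -
  have "Bk \<in> Ob C" "Bm \<in> Ob C" "Bn \<in> Ob C" using v u x cod_ob dom_ob by auto
  note typing = e v u x ob this
  have "(\<one> W \<otimes> (u \<cdot> (v \<otimes> \<one> Bl) \<cdot> (\<one> A \<otimes> x))) \<cdot> (e \<otimes> \<one> Bn)
      = (\<one> W \<otimes> u) \<cdot> (\<one> W \<otimes> v \<otimes> \<one> Bl) \<cdot> ((\<one> (W \<odot> A) \<otimes> x) \<cdot> (e \<otimes> \<one> Bn))"
    using typing by simp
  also have "(\<one> (W \<odot> A) \<otimes> x) \<cdot> (e \<otimes> \<one> Bn) = (e \<otimes> \<one> (Bj \<odot> Bl)) \<cdot> x"
    using unit_slide_left[of e "W \<odot> A" x] typing by simp
  also have "(\<one> W \<otimes> u) \<cdot> (\<one> W \<otimes> v \<otimes> \<one> Bl) \<cdot> (e \<otimes> \<one> (Bj \<odot> Bl)) \<cdot> x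
      = (\<one> W \<otimes> u) \<cdot> (((\<one> W \<otimes> v) \<cdot> (e \<otimes> \<one> Bj)) \<otimes> \<one> Bl) \<cdot> x"
    using typing by simp
  finally show ?thesis .
qed

text \<open>Sliding a unit morphism \<open>\<eta>\<close> up through a composite in which its dual \<open>\<epsilon>\<close> occurs: the two
  meet and cancel by the zigzag identity. This is the diagrammatic core of identity (iii).\<close>

lemma unit_cancels_counit_right:
  assumes \<epsilon>: "\<epsilon> \<in> Hom C (Q \<odot> P) \<bbbI>" and \<eta>: "\<eta> \<in> Hom C \<bbbI> (P \<odot> Q)"
    and zig: "(\<epsilon> \<otimes> \<one> Q) \<cdot> (\<one> Q \<otimes> \<eta>) = \<one> Q"
    and y: "y \<in> Hom C K (Bi \<odot> Bj)" and x: "x \<in> Hom C Bj (Bn \<odot> Q)" and v: "v \<in> Hom C (Bi \<odot> Bn) Bm"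
    and ob: "P \<in> Ob C" "Q \<in> Ob C" "Bi \<in> Ob C" "Bn \<in> Ob C"
  shows "((v \<cdot> (\<one> Bi \<otimes> ((\<one> Bn \<otimes> \<epsilon>) \<cdot> (x \<otimes> \<one> P))) \<cdot> (y \<otimes> \<one> P)) \<otimes> \<one> Q) \<cdot> (\<one> K \<otimes> \<eta>)
       = (v \<otimes> \<one> Q) \<cdot> (\<one> Bi \<otimes> x) \<cdot> y"
proof -
  have "K \<in> Ob C" "Bj \<in> Ob C" "Bm \<in> Ob C" using y x v cod_ob dom_ob by auto
  note typing = \<epsilon> \<eta> y x v ob this
  have "((v \<cdot> (\<one> Bi \<otimes> ((\<one> Bn \<otimes> \<epsilon>) \<cdot> (x \<otimes> \<one> P))) \<cdot> (y \<otimes> \<one> P)) \<otimes> \<one> Q) \<cdot> (\<one> K \<otimes> \<eta>)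
      = (v \<otimes> \<one> Q) \<cdot> (\<one> (Bi \<odot> Bn) \<otimes> \<epsilon> \<otimes> \<one> Q) \<cdot> (\<one> Bi \<otimes> x \<otimes> \<one> (P \<odot> Q))
          \<cdot> ((y \<otimes> \<one> (P \<odot> Q)) \<cdot> (\<one> K \<otimes> \<eta>))"
    using typing by simp
  also have "(y \<otimes> \<one> (P \<odot> Q)) \<cdot> (\<one> K \<otimes> \<eta>) = (\<one> (Bi \<odot> Bj) \<otimes> \<eta>) \<cdot> y"
    using unit_slide_right[of \<eta> "P \<odot> Q" y] typing by simp
  also have "(\<one> Bi \<otimes> x \<otimes> \<one> (P \<odot> Q)) \<cdot> (\<one> (Bi \<odot> Bj) \<otimes> \<eta>) \<cdot> y
      = (\<one> (Bi \<odot> Bn \<odot> Q) \<otimes> \<eta>) \<cdot> (\<one> Bi \<otimes> x) \<cdot> y"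
  proof (rule cmp_prefix_eq)
    show "(\<one> Bi \<otimes> x \<otimes> \<one> (P \<odot> Q)) \<cdot> (\<one> (Bi \<odot> Bj) \<otimes> \<eta>) = (\<one> (Bi \<odot> Bn \<odot> Q) \<otimes> \<eta>) \<cdot> (\<one> Bi \<otimes> x)"
      using unit_slide_right[of \<eta> "P \<odot> Q" "\<one> Bi \<otimes> x" "Bi \<odot> Bj" "Bi \<odot> Bn \<odot> Q"] typing by simp
  qed (use typing in simp_all)
  also have "(\<one> (Bi \<odot> Bn) \<otimes> \<epsilon> \<otimes> \<one> Q) \<cdot> (\<one> (Bi \<odot> Bn \<odot> Q) \<otimes> \<eta>) \<cdot> (\<one> Bi \<otimes> x) \<cdot> y
      = (\<one> (Bi \<odot> Bn) \<otimes> ((\<epsilon> \<otimes> \<one> Q) \<cdot> (\<one> Q \<otimes> \<eta>))) \<cdot> (\<one> Bi \<otimes> x) \<cdot> y"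
    using typing by simp
  finally show ?thesis using typing by (simp add: zig)
qed

text \<open>A counit \<open>\<epsilon>\<close> on the left and its dual unit \<open>\<eta>\<close> on the right cancel when the two strands
  are joined; the factors \<open>x\<close> and \<open>v\<close> end up side by side. This is the core of identity (ii).\<close>

lemma counit_cancels_unit_left:
  assumes \<eta>: "\<eta> \<in> Hom C \<bbbI> (Q \<odot> P)" and \<epsilon>: "\<epsilon> \<in> Hom C (P \<odot> Q) \<bbbI>"
    and zig: "(\<one> Q \<otimes> \<epsilon>) \<cdot> (\<eta> \<otimes> \<one> Q) = \<one> Q"
    and x: "x \<in> Hom C (Bk \<odot> Q) Bi" and v: "v \<in> Hom C Bl (Q \<odot> Bn)"
    and ob: "P \<in> Ob C" "Q \<in> Ob C" "Bk \<in> Ob C" "Bn \<in> Ob C"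
  shows "(\<one> Bi \<otimes> ((\<epsilon> \<otimes> \<one> Bn) \<cdot> (\<one> P \<otimes> v))) \<cdot> (((x \<otimes> \<one> P) \<cdot> (\<one> Bk \<otimes> \<eta>)) \<otimes> \<one> Bl)
       = (x \<otimes> \<one> Bn) \<cdot> (\<one> Bk \<otimes> v)"
proof -
  have "Bi \<in> Ob C" "Bl \<in> Ob C" using x v cod_ob dom_ob by auto
  note typing = \<eta> \<epsilon> x v ob this
  have inner: "(\<one> Q \<otimes> \<epsilon> \<otimes> \<one> Bn) \<cdot> (\<one> (Q \<odot> P) \<otimes> v) \<cdot> (\<eta> \<otimes> \<one> Bl) = v"
  proof -
    have "(\<one> (Q \<odot> P) \<otimes> v) \<cdot> (\<eta> \<otimes> \<one> Bl) = (\<eta> \<otimes> \<one> (Q \<odot> Bn)) \<cdot> v"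
      using unit_slide_left[of \<eta> "Q \<odot> P" v] typing by simp
    moreover have "(\<one> Q \<otimes> \<epsilon> \<otimes> \<one> Bn) \<cdot> (\<eta> \<otimes> \<one> (Q \<odot> Bn)) = ((\<one> Q \<otimes> \<epsilon>) \<cdot> (\<eta> \<otimes> \<one> Q)) \<otimes> \<one> Bn"
      using typing by simp
    ultimately show ?thesis using typing cmp_assoc[of v "\<eta> \<otimes> \<one> (Q \<odot> Bn)" "\<one> Q \<otimes> \<epsilon> \<otimes> \<one> Bn"]
      by (simp add: zig)
  qed
  have "(\<one> Bi \<otimes> ((\<epsilon> \<otimes> \<one> Bn) \<cdot> (\<one> P \<otimes> v))) \<cdot> (((x \<otimes> \<one> P) \<cdot> (\<one> Bk \<otimes> \<eta>)) \<otimes> \<one> Bl)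
      = (\<one> Bi \<otimes> \<epsilon> \<otimes> \<one> Bn) \<cdot> (\<one> (Bi \<odot> P) \<otimes> v) \<cdot> (x \<otimes> \<one> (P \<odot> Bl)) \<cdot> (\<one> Bk \<otimes> \<eta> \<otimes> \<one> Bl)"
    using typing by simp
  also have "(\<one> (Bi \<odot> P) \<otimes> v) \<cdot> (x \<otimes> \<one> (P \<odot> Bl)) \<cdot> (\<one> Bk \<otimes> \<eta> \<otimes> \<one> Bl)
      = (x \<otimes> \<one> (P \<odot> Q \<odot> Bn)) \<cdot> (\<one> (Bk \<odot> Q \<odot> P) \<otimes> v) \<cdot> (\<one> Bk \<otimes> \<eta> \<otimes> \<one> Bl)"
  proof (rule cmp_prefix_eq)
    show "(\<one> (Bi \<odot> P) \<otimes> v) \<cdot> (x \<otimes> \<one> (P \<odot> Bl)) = (x \<otimes> \<one> (P \<odot> Q \<odot> Bn)) \<cdot> (\<one> (Bk \<odot> Q \<odot> P) \<otimes> v)"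
      using slide[of "x \<otimes> \<one> P" v] typing by simp
  qed (use typing in simp_all)
  also have "(\<one> Bi \<otimes> \<epsilon> \<otimes> \<one> Bn) \<cdot> (x \<otimes> \<one> (P \<odot> Q \<odot> Bn)) \<cdot> (\<one> (Bk \<odot> Q \<odot> P) \<otimes> v) \<cdot> (\<one> Bk \<otimes> \<eta> \<otimes> \<one> Bl)
      = (x \<otimes> \<one> Bn) \<cdot> (\<one> (Bk \<odot> Q) \<otimes> \<epsilon> \<otimes> \<one> Bn) \<cdot> (\<one> (Bk \<odot> Q \<odot> P) \<otimes> v) \<cdot> (\<one> Bk \<otimes> \<eta> \<otimes> \<one> Bl)"
  proof (rule cmp_prefix_eq)
    show "(\<one> Bi \<otimes> \<epsilon> \<otimes> \<one> Bn) \<cdot> (x \<otimes> \<one> (P \<odot> Q \<odot> Bn)) = (x \<otimes> \<one> Bn) \<cdot> (\<one> (Bk \<odot> Q) \<otimes> \<epsilon> \<otimes> \<one> Bn)"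
      using slide[of x "\<epsilon> \<otimes> \<one> Bn"] typing by simp
  qed (use typing in simp_all)
  also have "(\<one> (Bk \<odot> Q) \<otimes> \<epsilon> \<otimes> \<one> Bn) \<cdot> (\<one> (Bk \<odot> Q \<odot> P) \<otimes> v) \<cdot> (\<one> Bk \<otimes> \<eta> \<otimes> \<one> Bl)
      = \<one> Bk \<otimes> ((\<one> Q \<otimes> \<epsilon> \<otimes> \<one> Bn) \<cdot> (\<one> (Q \<odot> P) \<otimes> v) \<cdot> (\<eta> \<otimes> \<one> Bl))"
    using typing by simp
  finally show ?thesis by (simp only: inner)
qed

lemma msum_typing:
  "a \<in> Ob C \<Longrightarrow> c \<in> Ob C \<Longrightarrow> \<forall>t\<in>set L. t \<in> Hom C a c \<Longrightarrow> msum_list C a c L \<in> Hom C a c"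
  by (induction L) auto

lemma msum_cmp_left:
  assumes "f \<in> Hom C a' a" "c \<in> Ob C" "\<forall>t\<in>set L. t \<in> Hom C a c"
  shows "msum_list C a c L \<cdot> f = msum_list C a' c (map (\<lambda>t. t \<cdot> f) L)"
  using assms(3)
proof (induction L)
  case (Cons t L)
  then have "msum_list C a c L \<in> Hom C a c" using assms by (intro msum_typing) auto
  with Cons assms show ?case by (simp add: cmp_add_left)
qed (use assms in simp)

lemma msum_cmp_right:
  assumes "g \<in> Hom C c c'" "a \<in> Ob C" "\<forall>t\<in>set L. t \<in> Hom C a c"
  shows "g \<cdot> msum_list C a c L = msum_list C a c' (map (\<lambda>t. g \<cdot> t) L)"
  using assms(3)
proof (induction L)
  case (Cons t L)
  then have "msum_list C a c L \<in> Hom C a c" using assms by (intro msum_typing) auto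
  with Cons assms show ?case by (simp add: cmp_add_right)
qed (use assms in simp)

lemma msum_all_zero: "a \<in> Ob C \<Longrightarrow> c \<in> Ob C \<Longrightarrow> \<forall>t\<in>set L. t = \<zero> a c \<Longrightarrow> msum_list C a c L = \<zero> a c"
  by (induction L) auto

definition lin_functional :: "'o \<Rightarrow> 'o \<Rightarrow> ('m \<Rightarrow> 'm) \<Rightarrow> bool" where
  "lin_functional a c \<phi> \<longleftrightarrow> (\<forall>f\<in>Hom C a c. \<phi> f \<in> \<kk>) \<and>
     (\<forall>f\<in>Hom C a c. \<forall>g\<in>Hom C a c. \<phi> (f \<oplus> g) = \<phi> f \<oplus> \<phi> g) \<and>
     (\<forall>s\<in>\<kk>. \<forall>f\<in>Hom C a c. \<phi> (s \<otimes> f) = s \<cdot> \<phi> f)"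

lemma lin_functional_zero:
  assumes lin: "lin_functional a c \<phi>" and "a \<in> Ob C" "c \<in> Ob C"
  shows "\<phi> (\<zero> a c) = \<zero> \<bbbI> \<bbbI>"
proof -
  have z: "\<zero> a c \<in> Hom C a c" using assms by simp
  have "\<phi> (\<zero> a c) = \<phi> (\<zero> a c \<oplus> \<zero> a c)" using assms by simp
  also have "\<dots> = \<phi> (\<zero> a c) \<oplus> \<phi> (\<zero> a c)" using lin z unfolding lin_functional_def by blast
  finally have "\<phi> (\<zero> a c) \<oplus> \<phi> (\<zero> a c) = \<phi> (\<zero> a c)" by simp
  then show ?thesis using idempotent_is_zero[of "\<phi> (\<zero> a c)"] lin z unfolding lin_functional_def by auto
qed

lemma lin_functional_combination:
  assumes lin: "lin_functional a c \<phi>" and ob: "a \<in> Ob C" "c \<in> Ob C"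
    and L: "\<forall>(k', x, y)\<in>set L. k' = k \<longrightarrow> s x y \<in> \<kk> \<and> g x y \<in> Hom C a c"
  shows "\<phi> (msum_list C a c (map (\<lambda>(k', x, y). if k' = k then s x y \<otimes> g x y else \<zero> a c) L))
       = msum_list C \<bbbI> \<bbbI> (map (\<lambda>(k', x, y). if k' = k then s x y \<cdot> \<phi> (g x y) else \<zero> \<bbbI> \<bbbI>) L)"
  using L
proof (induction L)
  case Nil then show ?case using lin_functional_zero[OF lin ob] by simp
next
  case (Cons t L)
  obtain k' x y where t: "t = (k', x, y)" by (cases t) auto
  let ?sum = "msum_list C a c (map (\<lambda>(k', x, y). if k' = k then s x y \<otimes> g x y else \<zero> a c) L)"
  let ?summand = "if k' = k then s x y \<otimes> g x y else \<zero> a c"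
  have sum: "?sum \<in> Hom C a c" using Cons.prems ob by (intro msum_typing) auto
  have summand: "?summand \<in> Hom C a c" using Cons.prems ob t by auto
  have "\<phi> (?summand \<oplus> ?sum) = \<phi> ?summand \<oplus> \<phi> ?sum"
    using lin sum summand unfolding lin_functional_def by blast
  moreover have "\<phi> ?summand = (if k' = k then s x y \<cdot> \<phi> (g x y) else \<zero> \<bbbI> \<bbbI>)"
    using lin Cons.prems t lin_functional_zero[OF lin ob] unfolding lin_functional_def by auto
  ultimately show ?case using Cons t by simp
qed

lemma lin_sandwich:
  assumes r: "r \<in> I" and P: "P \<in> Hom C c (V r)" and Q: "Q \<in> Hom C (V r) a"
  shows "lin_functional a c (\<lambda>f. \<langle>P \<cdot> f \<cdot> Q\<rangle>\<^bsub>r\<^esub>)"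
  unfolding lin_functional_def using assms
  by (auto simp: cmp_add_left cmp_add_right scalar_cmp_left scalar_cmp_right scal_add scal_smult)

lemma lin_pair_left:
  assumes k: "k \<in> I" and h: "h \<in> Hom C X (V k)"
  shows "lin_functional (V k) X (\<lambda>c. \<langle>h \<cdot> c\<rangle>\<^bsub>k\<^esub>)"
  unfolding lin_functional_def using assms
  by (auto simp: cmp_add_right scalar_cmp_right scal_add scal_smult)

lemma lin_pair_right:
  assumes k: "k \<in> I" and c: "c \<in> Hom C (V k) X"
  shows "lin_functional X (V k) (\<lambda>h. \<langle>h \<cdot> c\<rangle>\<^bsub>k\<^esub>)"
  unfolding lin_functional_def using assms
  by (auto simp: cmp_add_left scalar_cmp_left scal_add scal_smult)

lemma lin_whisker_left:
  assumes "lin_functional (X \<odot> a) (X \<odot> c) \<phi>" "X \<in> Ob C"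
  shows "lin_functional a c (\<lambda>f. \<phi> (\<one> X \<otimes> f))"
  using assms unfolding lin_functional_def by (auto simp: tnm_add_right scalar_tnm_right)

lemma lin_whisker_right:
  assumes "lin_functional (a \<odot> X) (c \<odot> X) \<phi>" "X \<in> Ob C"
  shows "lin_functional a c (\<lambda>f. \<phi> (f \<otimes> \<one> X))"
  using assms unfolding lin_functional_def by (auto simp: tnm_add_left)

text \<open>A decomposition of the identity of \<open>X\<close> through simple objects, as provided by axiom (4)
  of a \<open>\<Psi>\<close>-system for \<open>X = V i \<odot> V j\<close>.\<close>

definition decomposition :: "'o \<Rightarrow> ('i \<times> 'm \<times> 'm) list \<Rightarrow> bool" where
  "decomposition X ps \<longleftrightarrow>
     (\<forall>(k, x, y)\<in>set ps. k \<in> I \<and> x \<in> Hom C (V k) X \<and> y \<in> Hom C X (V k)) \<and>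
     \<one> X = msum_list C X X (map (\<lambda>(k, x, y). x \<cdot> y) ps)"

definition expand_check :: "'o \<Rightarrow> ('i \<times> 'm \<times> 'm) list \<Rightarrow> 'i \<Rightarrow> 'm \<Rightarrow> 'm" where
  "expand_check X ps k c =
     msum_list C (V k) X (map (\<lambda>(k', x, y). if k' = k then \<langle>y \<cdot> c\<rangle>\<^bsub>k\<^esub> \<otimes> x else \<zero> (V k) X) ps)"

definition expand_hat :: "'o \<Rightarrow> ('i \<times> 'm \<times> 'm) list \<Rightarrow> 'i \<Rightarrow> 'm \<Rightarrow> 'm" where
  "expand_hat X ps k h =
     msum_list C X (V k) (map (\<lambda>(k', x, y). if k' = k then \<langle>h \<cdot> x\<rangle>\<^bsub>k\<^esub> \<otimes> y else \<zero> X (V k)) ps)"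

definition spanning :: "'o \<Rightarrow> ('i \<times> 'm \<times> 'm) list \<Rightarrow> bool" where
  "spanning X ps \<longleftrightarrow>
     (\<forall>(k, x, y)\<in>set ps. k \<in> I \<and> x \<in> Hom C (V k) X \<and> y \<in> Hom C X (V k)) \<and>
     (\<forall>k\<in>I. \<forall>c\<in>Hom C (V k) X. c = expand_check X ps k c) \<and>
     (\<forall>k\<in>I. \<forall>h\<in>Hom C X (V k). h = expand_hat X ps k h)"

lemma through_simple_check:
  assumes k: "k \<in> I" "k' \<in> I" and xy: "x \<in> Hom C (V k') X" "y \<in> Hom C X (V k')"
    and c: "c \<in> Hom C (V k) X"
  shows "(x \<cdot> y) \<cdot> c = (if k' = k then \<langle>y \<cdot> c\<rangle>\<^bsub>k\<^esub> \<otimes> x else \<zero> (V k) X)"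
proof (cases "k' = k")
  case True
  define s where "s = \<langle>y \<cdot> c\<rangle>\<^bsub>k\<^esub>"
  have "s \<in> \<kk>" "y \<cdot> c = s \<otimes> \<one> (V k)" using scal_spec[of k "y \<cdot> c"] xy c k True unfolding s_def by auto
  then have "x \<cdot> y \<cdot> c = s \<otimes> x" using xy c k True by (simp add: scalar_cmp_right)
  then show ?thesis using True xy c k unfolding s_def by simp
next
  case False
  then have "y \<cdot> c = \<zero> (V k) (V k')" using hom_distinct_zero[of k k' "y \<cdot> c"] xy c k by simp
  then show ?thesis using False xy c k by simp
qed

lemma through_simple_hat:
  assumes k: "k \<in> I" "k' \<in> I" and xy: "x \<in> Hom C (V k') X" "y \<in> Hom C X (V k')"
    and h: "h \<in> Hom C X (V k)"
  shows "h \<cdot> x \<cdot> y = (if k' = k then \<langle>h \<cdot> x\<rangle>\<^bsub>k\<^esub> \<otimes> y else \<zero> X (V k))"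
proof (cases "k' = k")
  case True
  define s where "s = \<langle>h \<cdot> x\<rangle>\<^bsub>k\<^esub>"
  have s: "s \<in> \<kk>" "h \<cdot> x = s \<otimes> \<one> (V k)" using scal_spec[of k "h \<cdot> x"] xy h k True unfolding s_def by auto
  have "h \<cdot> x \<cdot> y = (h \<cdot> x) \<cdot> y" using xy h k True by simp
  also have "\<dots> = s \<otimes> y" using s xy k True by (simp add: scalar_cmp_left)
  finally show ?thesis using True unfolding s_def by simp
next
  case False
  then have "h \<cdot> x = \<zero> (V k') (V k)" using hom_distinct_zero[of k' k "h \<cdot> x"] xy h k by simp
  then show ?thesis using False xy h k cmp_assoc[of y x h] by simp
qed

text \<open>A decomposition of the identity spans: compose it with the given morphism and apply the
  previous two lemmas termwise.\<close>

lemma decomposition_expand_check: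
  assumes X: "X \<in> Ob C" and dec: "decomposition X ps" and k: "k \<in> I" and c: "c \<in> Hom C (V k) X"
  shows "c = expand_check X ps k c"
proof -
  have ps: "\<forall>(k, x, y)\<in>set ps. k \<in> I \<and> x \<in> Hom C (V k) X \<and> y \<in> Hom C X (V k)"
    and id: "\<one> X = msum_list C X X (map (\<lambda>(k, x, y). x \<cdot> y) ps)"
    using dec unfolding decomposition_def by auto
  have "c = msum_list C X X (map (\<lambda>(k, x, y). x \<cdot> y) ps) \<cdot> c" using c id[symmetric] by simp
  also have "\<dots> = msum_list C (V k) X (map (\<lambda>t. t \<cdot> c) (map (\<lambda>(k, x, y). x \<cdot> y) ps))"
    using ps c X by (intro msum_cmp_left) auto
  also have "map (\<lambda>t. t \<cdot> c) (map (\<lambda>(k, x, y). x \<cdot> y) ps)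
      = map (\<lambda>(k', x, y). if k' = k then \<langle>y \<cdot> c\<rangle>\<^bsub>k\<^esub> \<otimes> x else \<zero> (V k) X) ps"
    using through_simple_check[OF k(1) _ _ _ c] ps by (auto intro: map_cong)
  finally show ?thesis unfolding expand_check_def .
qed

lemma decomposition_expand_hat:
  assumes X: "X \<in> Ob C" and dec: "decomposition X ps" and k: "k \<in> I" and h: "h \<in> Hom C X (V k)"
  shows "h = expand_hat X ps k h"
proof -
  have ps: "\<forall>(k, x, y)\<in>set ps. k \<in> I \<and> x \<in> Hom C (V k) X \<and> y \<in> Hom C X (V k)"
    and id: "\<one> X = msum_list C X X (map (\<lambda>(k, x, y). x \<cdot> y) ps)"
    using dec unfolding decomposition_def by auto
  have "h = h \<cdot> msum_list C X X (map (\<lambda>(k, x, y). x \<cdot> y) ps)" using h id[symmetric] by simp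
  also have "\<dots> = msum_list C X (V k) (map (\<lambda>t. h \<cdot> t) (map (\<lambda>(k, x, y). x \<cdot> y) ps))"
    using ps h X by (intro msum_cmp_right) auto
  also have "map (\<lambda>t. h \<cdot> t) (map (\<lambda>(k, x, y). x \<cdot> y) ps)
      = map (\<lambda>(k', x, y). if k' = k then \<langle>h \<cdot> x\<rangle>\<^bsub>k\<^esub> \<otimes> y else \<zero> X (V k)) ps"
    using through_simple_hat[OF k(1) _ _ _ h] ps by (auto intro: map_cong)
  finally show ?thesis unfolding expand_hat_def .
qed

lemma decomposition_spanning: "X \<in> Ob C \<Longrightarrow> decomposition X ps \<Longrightarrow> spanning X ps"
  unfolding spanning_def using decomposition_expand_check decomposition_expand_hat
  by (auto simp: decomposition_def simp del: Hom_iff)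

lemma nonzero_coefficient:
  assumes ps: "spanning X ps" and X: "X \<in> Ob C" and k: "k \<in> I" and g: "g \<in> Hom C (V k) X"
    and nz: "g \<noteq> \<zero> (V k) X"
  shows "\<exists>x y. (k, x, y) \<in> set ps \<and> \<langle>y \<cdot> g\<rangle>\<^bsub>k\<^esub> \<noteq> \<zero> \<bbbI> \<bbbI>"
proof (rule ccontr)
  assume "\<not> ?thesis"
  then have "\<forall>t\<in>set (map (\<lambda>(k', x, y). if k' = k then \<langle>y \<cdot> g\<rangle>\<^bsub>k\<^esub> \<otimes> x else \<zero> (V k) X) ps).
      t = \<zero> (V k) X"
    using ps X k unfolding spanning_def by fastforce
  then have "expand_check X ps k g = \<zero> (V k) X" using X k unfolding expand_check_def by (simp add: msum_all_zero)
  moreover have "g = expand_check X ps k g" using ps k g unfolding spanning_def by blast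
  ultimately show False using nz by simp
qed

lemma decomposition_exists:
  assumes "i \<in> I" "j \<in> I" "\<exists>k\<in>I. Hom C (V k) (V i \<odot> V j) \<noteq> {\<zero> (V k) (V i \<odot> V j)}"
  shows "\<exists>ps. decomposition (V i \<odot> V j) ps"
proof -
  have "\<forall>i\<in>I. \<forall>j\<in>I. (\<exists>k\<in>I. Hom C (V k) (V i \<odot> V j) \<noteq> {\<zero> (V k) (V i \<odot> V j)}) \<longrightarrow>
      (\<exists>ps :: ('i \<times> 'm \<times> 'm) list.
         (\<forall>(k, x, y)\<in>set ps. k \<in> I \<and> x \<in> Hom C (V k) (V i \<odot> V j) \<and> y \<in> Hom C (V i \<odot> V j) (V k)) \<and>
         \<one> (V i \<odot> V j) = msum_list C (V i \<odot> V j) (V i \<odot> V j) (map (\<lambda>(k, x, y). x \<cdot> y) ps))"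
    using psi[unfolded psi_system_def] by (elim conjE) assumption
  with assms show ?thesis unfolding decomposition_def by blast
qed

lemma bend_inverse:
  assumes "i \<in> I" "f \<in> Hom C (V i \<odot> X) Y" "X \<in> Ob C"
  shows "(d i \<otimes> \<one> Y) \<cdot> (\<one> (V i) \<otimes> ((\<one> (V (st i)) \<otimes> f) \<cdot> (b (st i) \<otimes> \<one> X))) = f"
  by (rule mate_inverse) (use assms zigzag_right in simp_all)

text \<open>Bend the given morphism into \<open>V j \<rightarrow> V (st i) \<odot> V k\<close>,
  expand it through simple objects and bend back a nonzero coefficient morphism.\<close>

lemma nonzero_hom_from_tensor:
  assumes ijk: "i \<in> I" "j \<in> I" "k \<in> I" and f: "f \<in> Hom C (V i \<odot> V j) (V k)"
    and nz: "f \<noteq> \<zero> (V i \<odot> V j) (V k)"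
  shows "Hom C (V k) (V i \<odot> V j) \<noteq> {\<zero> (V k) (V i \<odot> V j)}"
proof -
  let ?X = "V (st i) \<odot> V k"
  define g where "g = (\<one> (V (st i)) \<otimes> f) \<cdot> (b (st i) \<otimes> \<one> (V j))"
  have g: "g \<in> Hom C (V j) ?X" unfolding g_def using ijk f by simp
  have "g \<noteq> \<zero> (V j) ?X"
  proof
    assume "g = \<zero> (V j) ?X"
    then have "f = (d i \<otimes> \<one> (V k)) \<cdot> (\<one> (V i) \<otimes> \<zero> (V j) ?X)"
      using bend_inverse[of i f "V j" "V k"] ijk f unfolding g_def by simp
    with nz ijk show False by simp
  qed
  then have "Hom C (V j) ?X \<noteq> {\<zero> (V j) ?X}" using g by blast
  then have "\<exists>ps. decomposition ?X ps" using ijk by (intro decomposition_exists bexI[of _ j]) auto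
  then obtain ps where "decomposition ?X ps" ..
  then have ps: "spanning ?X ps" using ijk by (intro decomposition_spanning) auto
  obtain x y where xy: "(j, x, y) \<in> set ps" "\<langle>y \<cdot> g\<rangle>\<^bsub>j\<^esub> \<noteq> \<zero> \<bbbI> \<bbbI>"
    using nonzero_coefficient[OF ps _ ijk(2) g \<open>g \<noteq> \<zero> (V j) ?X\<close>] ijk by auto
  have y: "y \<in> Hom C ?X (V j)" using ps xy(1) unfolding spanning_def by auto
  define h where "h = (\<one> (V i) \<otimes> y) \<cdot> (b i \<otimes> \<one> (V k))"
  have h: "h \<in> Hom C (V k) (V i \<odot> V j)" unfolding h_def using ijk y by simp
  have "h \<noteq> \<zero> (V k) (V i \<odot> V j)"
  proof
    assume "h = \<zero> (V k) (V i \<odot> V j)"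
    then have "y = (d (st i) \<otimes> \<one> (V j)) \<cdot> (\<one> (V (st i)) \<otimes> \<zero> (V k) (V i \<odot> V j))"
      using bend_inverse[of "st i" y "V k" "V j"] ijk y unfolding h_def by simp
    then have "y \<cdot> g = \<zero> (V j) (V j)" using ijk g by simp
    with xy(2) ijk show False by simp
  qed
  with h show ?thesis by blast
qed

text \<open>Every \<open>V i \<odot> V j\<close> has a spanning family: axiom (4) provides one if some \<open>V k\<close> maps
  nontrivially into it; otherwise both kinds of Hom-spaces vanish and the empty family spans.\<close>

lemma tensor_spanning:
  assumes ij: "i \<in> I" "j \<in> I"
  shows "\<exists>ps. spanning (V i \<odot> V j) ps"
proof (cases "\<exists>k\<in>I. Hom C (V k) (V i \<odot> V j) \<noteq> {\<zero> (V k) (V i \<odot> V j)}")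
  case True
  then obtain ps where "decomposition (V i \<odot> V j) ps" using decomposition_exists[OF ij] by blast
  then have "spanning (V i \<odot> V j) ps" using ij by (intro decomposition_spanning) auto
  then show ?thesis ..
next
  case False
  have "c = \<zero> (V k) (V i \<odot> V j)" if "k \<in> I" "c \<in> Hom C (V k) (V i \<odot> V j)" for k c
    using False that by blast
  moreover have "h = \<zero> (V i \<odot> V j) (V k)" if "k \<in> I" "h \<in> Hom C (V i \<odot> V j) (V k)" for k h
    using nonzero_hom_from_tensor[OF ij that(1) that(2)] False that(1) by blast
  ultimately have "spanning (V i \<odot> V j) []"
    unfolding spanning_def expand_check_def expand_hat_def by simp
  then show ?thesis ..
qed

lemma pairing_nondegenerate_check:
  assumes ps: "spanning X ps" and k: "k \<in> I" and c: "c \<in> Hom C (V k) X" "c' \<in> Hom C (V k) X"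
    and eq: "\<And>f. f \<in> Hom C X (V k) \<Longrightarrow> \<langle>f \<cdot> c\<rangle>\<^bsub>k\<^esub> = \<langle>f \<cdot> c'\<rangle>\<^bsub>k\<^esub>"
  shows "c = c'"
proof -
  have "expand_check X ps k c = expand_check X ps k c'"
    unfolding expand_check_def using ps eq unfolding spanning_def by (auto intro!: arg_cong[where f="msum_list C _ _"] map_cong)
  then show ?thesis using ps k c unfolding spanning_def by metis
qed

lemma pairing_nondegenerate_hat:
  assumes ps: "spanning X ps" and k: "k \<in> I" and h: "h \<in> Hom C X (V k)" "h' \<in> Hom C X (V k)"
    and eq: "\<And>g. g \<in> Hom C (V k) X \<Longrightarrow> \<langle>h \<cdot> g\<rangle>\<^bsub>k\<^esub> = \<langle>h' \<cdot> g\<rangle>\<^bsub>k\<^esub>"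
  shows "h = h'"
proof -
  have "expand_hat X ps k h = expand_hat X ps k h'"
    unfolding expand_hat_def using ps eq unfolding spanning_def by (auto intro!: arg_cong[where f="msum_list C _ _"] map_cong)
  then show ?thesis using ps k h unfolding spanning_def by metis
qed

text \<open>\<dots> and every linear form on one side is represented by an element of the other side
  (take the combination of the spanning morphisms with the values of the form as coefficients).\<close>

lemma represent_check:
  assumes ps: "spanning X ps" and X: "X \<in> Ob C" and k: "k \<in> I" and \<phi>: "lin_functional X (V k) \<phi>"
  shows "\<exists>c\<in>Hom C (V k) X. \<forall>f\<in>Hom C X (V k). \<langle>f \<cdot> c\<rangle>\<^bsub>k\<^esub> = \<phi> f"
proof
  have fam: "\<forall>(k', x, y)\<in>set ps. k' \<in> I \<and> x \<in> Hom C (V k') X \<and> y \<in> Hom C X (V k')"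
    using ps unfolding spanning_def by auto
  have \<phi>K: "\<phi> y \<in> \<kk>" if "y \<in> Hom C X (V k)" for y using \<phi> that unfolding lin_functional_def by blast
  define c where "c = msum_list C (V k) X (map (\<lambda>(k', x, y). if k' = k then \<phi> y \<otimes> x else \<zero> (V k) X) ps)"
  show "c \<in> Hom C (V k) X" unfolding c_def using fam \<phi>K X k by (intro msum_typing) auto
  show "\<forall>f\<in>Hom C X (V k). \<langle>f \<cdot> c\<rangle>\<^bsub>k\<^esub> = \<phi> f"
  proof
    fix f assume f: "f \<in> Hom C X (V k)"
    have "\<langle>f \<cdot> c\<rangle>\<^bsub>k\<^esub> = msum_list C \<bbbI> \<bbbI> (map (\<lambda>(k', x, y). if k' = k then \<phi> y \<cdot> \<langle>f \<cdot> x\<rangle>\<^bsub>k\<^esub> else \<zero> \<bbbI> \<bbbI>) ps)"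
      unfolding c_def using fam \<phi>K X k
      by (intro lin_functional_combination[OF lin_pair_left[OF k f]]) auto
    also have "\<dots> = msum_list C \<bbbI> \<bbbI> (map (\<lambda>(k', x, y). if k' = k then \<langle>f \<cdot> x\<rangle>\<^bsub>k\<^esub> \<cdot> \<phi> y else \<zero> \<bbbI> \<bbbI>) ps)"
    proof -
      have "\<phi> y \<cdot> \<langle>f \<cdot> x\<rangle>\<^bsub>k\<^esub> = \<langle>f \<cdot> x\<rangle>\<^bsub>k\<^esub> \<cdot> \<phi> y" if "(k, x, y) \<in> set ps" for x y
        using that fam \<phi>K[of y] f k by (intro scalar_comm) auto
      then show ?thesis by (auto intro!: arg_cong[where f="msum_list C _ _"] map_cong)
    qed
    also have "\<dots> = \<phi> (expand_hat X ps k f)"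
      unfolding expand_hat_def using fam f X k by (intro lin_functional_combination[OF \<phi>, symmetric]) auto
    also have "\<dots> = \<phi> f" using ps k f unfolding spanning_def by metis
    finally show "\<langle>f \<cdot> c\<rangle>\<^bsub>k\<^esub> = \<phi> f" .
  qed
qed

lemma represent_hat:
  assumes ps: "spanning X ps" and X: "X \<in> Ob C" and k: "k \<in> I" and \<psi>: "lin_functional (V k) X \<psi>"
  shows "\<exists>h\<in>Hom C X (V k). \<forall>g\<in>Hom C (V k) X. \<langle>h \<cdot> g\<rangle>\<^bsub>k\<^esub> = \<psi> g"
proof
  have fam: "\<forall>(k', x, y)\<in>set ps. k' \<in> I \<and> x \<in> Hom C (V k') X \<and> y \<in> Hom C X (V k')"
    using ps unfolding spanning_def by auto
  have \<psi>K: "\<psi> x \<in> \<kk>" if "x \<in> Hom C (V k) X" for x using \<psi> that unfolding lin_functional_def by blast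
  define h where "h = msum_list C X (V k) (map (\<lambda>(k', x, y). if k' = k then \<psi> x \<otimes> y else \<zero> X (V k)) ps)"
  show "h \<in> Hom C X (V k)" unfolding h_def using fam \<psi>K X k by (intro msum_typing) auto
  show "\<forall>g\<in>Hom C (V k) X. \<langle>h \<cdot> g\<rangle>\<^bsub>k\<^esub> = \<psi> g"
  proof
    fix g assume g: "g \<in> Hom C (V k) X"
    have "\<langle>h \<cdot> g\<rangle>\<^bsub>k\<^esub> = msum_list C \<bbbI> \<bbbI> (map (\<lambda>(k', x, y). if k' = k then \<psi> x \<cdot> \<langle>y \<cdot> g\<rangle>\<^bsub>k\<^esub> else \<zero> \<bbbI> \<bbbI>) ps)"
      unfolding h_def using fam \<psi>K X k
      by (intro lin_functional_combination[OF lin_pair_right[OF k g]]) auto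
    also have "\<dots> = msum_list C \<bbbI> \<bbbI> (map (\<lambda>(k', x, y). if k' = k then \<langle>y \<cdot> g\<rangle>\<^bsub>k\<^esub> \<cdot> \<psi> x else \<zero> \<bbbI> \<bbbI>) ps)"
    proof -
      have "\<psi> x \<cdot> \<langle>y \<cdot> g\<rangle>\<^bsub>k\<^esub> = \<langle>y \<cdot> g\<rangle>\<^bsub>k\<^esub> \<cdot> \<psi> x" if "(k, x, y) \<in> set ps" for x y
        using that fam \<psi>K[of x] g k by (intro scalar_comm) auto
      then show ?thesis by (auto intro!: arg_cong[where f="msum_list C _ _"] map_cong)
    qed
    also have "\<dots> = \<psi> (expand_check X ps k g)"
      unfolding expand_check_def using fam g X k by (intro lin_functional_combination[OF \<psi>, symmetric]) auto
    also have "\<dots> = \<psi> g" using ps k g unfolding spanning_def by metis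
    finally show "\<langle>h \<cdot> g\<rangle>\<^bsub>k\<^esub> = \<psi> g" .
  qed
qed

abbreviation H :: "('i, 'm) Helem set" where "H \<equiv> Hspace C I V"

lemma component_typing [simp]:
  assumes "x \<in> H" "i \<in> I" "j \<in> I" "k \<in> I"
  shows "pihat x i j k \<in> Mor C" "dom C (pihat x i j k) = V i \<odot> V j" "cod C (pihat x i j k) = V k"
    "picheck x i j k \<in> Mor C" "dom C (picheck x i j k) = V k" "cod C (picheck x i j k) = V i \<odot> V j"
proof -
  have "\<forall>i\<in>I. \<forall>j\<in>I. \<forall>k\<in>I. pihat x i j k \<in> Hom C (V i \<odot> V j) (V k) \<and> picheck x i j k \<in> Hom C (V k) (V i \<odot> V j)"
    using assms(1) unfolding Hspace_def by blast
  then show "pihat x i j k \<in> Mor C" "dom C (pihat x i j k) = V i \<odot> V j" "cod C (pihat x i j k) = V k"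
    "picheck x i j k \<in> Mor C" "dom C (picheck x i j k) = V k" "cod C (picheck x i j k) = V i \<odot> V j"
    using assms(2-4) by auto
qed

lemma H_eqI:
  assumes "x \<in> H" "z \<in> H"
    and "\<And>i j k. i \<in> I \<Longrightarrow> j \<in> I \<Longrightarrow> k \<in> I \<Longrightarrow> pihat x i j k = pihat z i j k \<and> picheck x i j k = picheck z i j k"
  shows "x = z"
proof -
  have "pihat x i j k = pihat z i j k \<and> picheck x i j k = picheck z i j k" for i j k
    using assms unfolding Hspace_def by (cases "i \<in> I \<and> j \<in> I \<and> k \<in> I") auto
  then show ?thesis unfolding pihat_def picheck_def by (intro prod_eqI ext) auto
qed

lemma ksum_reindex:
  assumes h: "bij_betw h S' S" and fg: "\<And>a. a \<in> S' \<Longrightarrow> f (h a) = g a"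
  shows "ksum C f S = ksum C g S'"
proof -
  let ?z = "\<zero> \<bbbI> \<bbbI>"
  have supp: "{a\<in>S. f a \<noteq> ?z} = h ` {a\<in>S'. g a \<noteq> ?z}"
    using h fg unfolding bij_betw_def by force
  have inj: "inj_on h {a\<in>S'. g a \<noteq> ?z}" using h unfolding bij_betw_def inj_on_def by auto
  show ?thesis unfolding ksum_def supp fold_image[OF inj]
    by (rule fold_closed_eq[where B=UNIV]) (auto simp: fg)
qed

lemma ksum_cong: "(\<And>a. a \<in> S \<Longrightarrow> f a = g a) \<Longrightarrow> ksum C f S = ksum C g S"
  using ksum_reindex[of id S S f g] by simp

lemma ksum_single:
  assumes "t \<in> S" "\<And>a. a \<in> S \<Longrightarrow> a \<noteq> t \<Longrightarrow> f a = \<zero> \<bbbI> \<bbbI>" "f t \<in> \<kk>"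
  shows "ksum C f S = f t"
proof (cases "f t = \<zero> \<bbbI> \<bbbI>")
  case True
  then have "{a \<in> S. f a \<noteq> \<zero> \<bbbI> \<bbbI>} = {}" using assms(2) by auto
  then show ?thesis unfolding ksum_def using True by (simp only:) simp
next
  case False
  then have supp: "{a \<in> S. f a \<noteq> \<zero> \<bbbI> \<bbbI>} = {t}" using assms(1,2) by auto
  interpret comp_fun_commute_on "{t}" "\<lambda>a acc. f a \<oplus> acc" by unfold_locales auto
  show ?thesis unfolding ksum_def supp using assms(3) by (simp add: fold_insert[of t "{}"])
qed

definition hat_vec :: "'i \<Rightarrow> 'i \<Rightarrow> 'i \<Rightarrow> 'm \<Rightarrow> ('i, 'm) Helem" where
  "hat_vec p q r f =
     ((\<lambda>i j k. if i \<in> I \<and> j \<in> I \<and> k \<in> I then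
         (if (i, j, k) = (p, q, r) then f else \<zero> (V i \<odot> V j) (V k)) else undefined),
      (\<lambda>i j k. if i \<in> I \<and> j \<in> I \<and> k \<in> I then \<zero> (V k) (V i \<odot> V j) else undefined))"

definition check_vec :: "'i \<Rightarrow> 'i \<Rightarrow> 'i \<Rightarrow> 'm \<Rightarrow> ('i, 'm) Helem" where
  "check_vec p q r g =
     ((\<lambda>i j k. if i \<in> I \<and> j \<in> I \<and> k \<in> I then \<zero> (V i \<odot> V j) (V k) else undefined),
      (\<lambda>i j k. if i \<in> I \<and> j \<in> I \<and> k \<in> I then
         (if (i, j, k) = (p, q, r) then g else \<zero> (V k) (V i \<odot> V j)) else undefined))"

lemma hat_vec_in_H:
  assumes "p \<in> I" "q \<in> I" "r \<in> I" "f \<in> Hom C (V p \<odot> V q) (V r)"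
  shows "hat_vec p q r f \<in> H"
proof -
  have "{(i, j, k). i \<in> I \<and> j \<in> I \<and> k \<in> I \<and> pihat (hat_vec p q r f) i j k \<noteq> \<zero> (V i \<odot> V j) (V k)}
      \<subseteq> {(p, q, r)}"
    by (auto simp: hat_vec_def pihat_def)
  then have fin: "finite {(i, j, k). i \<in> I \<and> j \<in> I \<and> k \<in> I \<and>
      pihat (hat_vec p q r f) i j k \<noteq> \<zero> (V i \<odot> V j) (V k)}" by (rule finite_subset) simp
  moreover have empty: "{(i, j, k). i \<in> I \<and> j \<in> I \<and> k \<in> I \<and>
      picheck (hat_vec p q r f) i j k \<noteq> \<zero> (V k) (V i \<odot> V j)} = {}"
    by (auto simp: hat_vec_def picheck_def)
  ultimately show ?thesis unfolding Hspace_def mem_Collect_eq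
  proof (intro conjI)
    show "\<forall>i\<in>I. \<forall>j\<in>I. \<forall>k\<in>I. pihat (hat_vec p q r f) i j k \<in> Hom C (V i \<odot> V j) (V k) \<and>
        picheck (hat_vec p q r f) i j k \<in> Hom C (V k) (V i \<odot> V j)"
      using assms by (auto simp: hat_vec_def pihat_def picheck_def)
    show "\<forall>i j k. \<not> (i \<in> I \<and> j \<in> I \<and> k \<in> I) \<longrightarrow>
        pihat (hat_vec p q r f) i j k = undefined \<and> picheck (hat_vec p q r f) i j k = undefined"
      by (auto simp: hat_vec_def pihat_def picheck_def)
  qed (simp_all only: fin empty finite.emptyI)
qed

lemma check_vec_in_H:
  assumes "p \<in> I" "q \<in> I" "r \<in> I" "g \<in> Hom C (V r) (V p \<odot> V q)"
  shows "check_vec p q r g \<in> H"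
proof -
  have "{(i, j, k). i \<in> I \<and> j \<in> I \<and> k \<in> I \<and> picheck (check_vec p q r g) i j k \<noteq> \<zero> (V k) (V i \<odot> V j)}
      \<subseteq> {(p, q, r)}"
    by (auto simp: check_vec_def picheck_def)
  then have fin: "finite {(i, j, k). i \<in> I \<and> j \<in> I \<and> k \<in> I \<and>
      picheck (check_vec p q r g) i j k \<noteq> \<zero> (V k) (V i \<odot> V j)}" by (rule finite_subset) simp
  moreover have empty: "{(i, j, k). i \<in> I \<and> j \<in> I \<and> k \<in> I \<and>
      pihat (check_vec p q r g) i j k \<noteq> \<zero> (V i \<odot> V j) (V k)} = {}"
    by (auto simp: check_vec_def pihat_def)
  ultimately show ?thesis unfolding Hspace_def mem_Collect_eq
  proof (intro conjI)
    show "\<forall>i\<in>I. \<forall>j\<in>I. \<forall>k\<in>I. pihat (check_vec p q r g) i j k \<in> Hom C (V i \<odot> V j) (V k) \<and>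
        picheck (check_vec p q r g) i j k \<in> Hom C (V k) (V i \<odot> V j)"
      using assms by (auto simp: check_vec_def pihat_def picheck_def)
    show "\<forall>i j k. \<not> (i \<in> I \<and> j \<in> I \<and> k \<in> I) \<longrightarrow>
        pihat (check_vec p q r g) i j k = undefined \<and> picheck (check_vec p q r g) i j k = undefined"
      by (auto simp: check_vec_def pihat_def picheck_def)
  qed (simp_all only: fin empty finite.emptyI)
qed

lemma hform_hat_vec:
  assumes z: "z \<in> H" and pqr: "p \<in> I" "q \<in> I" "r \<in> I" and f: "f \<in> Hom C (V p \<odot> V q) (V r)"
  shows "hform C I V (hat_vec p q r f) z = \<langle>f \<cdot> picheck z p q r\<rangle>\<^bsub>r\<^esub>"
  unfolding hform_def
  by (subst ksum_single[where t="(p, q, r)"])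
    (use z pqr f in \<open>auto simp: hat_vec_def pihat_def[of "(_, _)"] picheck_def[of "(_, _)"] split: if_splits\<close>)

lemma hform_check_vec:
  assumes z: "z \<in> H" and pqr: "p \<in> I" "q \<in> I" "r \<in> I" and g: "g \<in> Hom C (V r) (V p \<odot> V q)"
  shows "hform C I V (check_vec p q r g) z = \<langle>pihat z p q r \<cdot> g\<rangle>\<^bsub>r\<^esub>"
  unfolding hform_def
  by (subst ksum_single[where t="(p, q, r)"])
    (use z pqr g in \<open>auto simp: check_vec_def pihat_def[of "(_, _)"] picheck_def[of "(_, _)"] split: if_splits\<close>)

text \<open>The bilinear form on \<open>H\<close> is nondegenerate, so transposes are unique.\<close>

lemma hform_nondegenerate:
  assumes z: "z \<in> H" "z' \<in> H" and eq: "\<And>x. x \<in> H \<Longrightarrow> hform C I V x z = hform C I V x z'"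
  shows "z = z'"
proof (rule H_eqI[OF z])
  fix i j k assume ijk: "i \<in> I" "j \<in> I" "k \<in> I"
  obtain ps where ps: "spanning (V i \<odot> V j) ps" using tensor_spanning ijk by blast
  have "pihat z i j k = pihat z' i j k"
  proof (rule pairing_nondegenerate_hat[OF ps ijk(3)])
    fix g assume g: "g \<in> Hom C (V k) (V i \<odot> V j)"
    show "\<langle>pihat z i j k \<cdot> g\<rangle>\<^bsub>k\<^esub> = \<langle>pihat z' i j k \<cdot> g\<rangle>\<^bsub>k\<^esub>"
      using eq[OF check_vec_in_H[OF ijk g]] hform_check_vec[OF _ ijk g] z by simp
  qed (use z ijk in auto)
  moreover have "picheck z i j k = picheck z' i j k"
  proof (rule pairing_nondegenerate_check[OF ps ijk(3)])
    fix f assume f: "f \<in> Hom C (V i \<odot> V j) (V k)"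
    show "\<langle>f \<cdot> picheck z i j k\<rangle>\<^bsub>k\<^esub> = \<langle>f \<cdot> picheck z' i j k\<rangle>\<^bsub>k\<^esub>"
      using eq[OF hat_vec_in_H[OF ijk f]] hform_hat_vec[OF _ ijk f] z by simp
  qed (use z ijk in auto)
  ultimately show "pihat z i j k = pihat z' i j k \<and> picheck z i j k = picheck z' i j k" ..
qed

lemma transp_eqI:
  assumes "z \<in> H" "\<And>x. x \<in> H \<Longrightarrow> hform C I V (F x) y = hform C I V x z"
  shows "transp C I V F y = z"
  unfolding transp_def
proof (rule the_equality)
  show "z \<in> H \<and> (\<forall>x\<in>H. hform C I V (F x) y = hform C I V x z)" using assms by auto
  fix z' assume "z' \<in> H \<and> (\<forall>x\<in>H. hform C I V (F x) y = hform C I V x z')"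
  then show "z' = z" using assms by (intro hform_nondegenerate) auto
qed

definition linear_family :: "('i \<Rightarrow> 'i \<Rightarrow> 'i \<Rightarrow> 'm \<Rightarrow> 'm) \<Rightarrow> ('i \<Rightarrow> 'i \<Rightarrow> 'i \<Rightarrow> 'm \<Rightarrow> 'm) \<Rightarrow> bool" where
  "linear_family \<phi> \<psi> \<longleftrightarrow> (\<forall>i\<in>I. \<forall>j\<in>I. \<forall>k\<in>I.
     lin_functional (V i \<odot> V j) (V k) (\<phi> i j k) \<and> lin_functional (V k) (V i \<odot> V j) (\<psi> i j k))"

definition rep_vec :: "('i \<Rightarrow> 'i \<Rightarrow> 'i \<Rightarrow> 'm \<Rightarrow> 'm) \<Rightarrow> ('i \<Rightarrow> 'i \<Rightarrow> 'i \<Rightarrow> 'm \<Rightarrow> 'm) \<Rightarrow> ('i, 'm) Helem" where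
  "rep_vec \<phi> \<psi> =
     ((\<lambda>i j k. if i \<in> I \<and> j \<in> I \<and> k \<in> I then
         (SOME h. h \<in> Hom C (V i \<odot> V j) (V k) \<and> (\<forall>g\<in>Hom C (V k) (V i \<odot> V j). \<langle>h \<cdot> g\<rangle>\<^bsub>k\<^esub> = \<psi> i j k g))
       else undefined),
      (\<lambda>i j k. if i \<in> I \<and> j \<in> I \<and> k \<in> I then
         (SOME c. c \<in> Hom C (V k) (V i \<odot> V j) \<and> (\<forall>f\<in>Hom C (V i \<odot> V j) (V k). \<langle>f \<cdot> c\<rangle>\<^bsub>k\<^esub> = \<phi> i j k f))
       else undefined))"

lemma rep_vec_hat:
  assumes lin: "linear_family \<phi> \<psi>" and ijk: "i \<in> I" "j \<in> I" "k \<in> I"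
  shows "pihat (rep_vec \<phi> \<psi>) i j k \<in> Hom C (V i \<odot> V j) (V k)"
    "\<And>g. g \<in> Hom C (V k) (V i \<odot> V j) \<Longrightarrow> \<langle>pihat (rep_vec \<phi> \<psi>) i j k \<cdot> g\<rangle>\<^bsub>k\<^esub> = \<psi> i j k g"
proof -
  obtain ps where ps: "spanning (V i \<odot> V j) ps" using tensor_spanning ijk by blast
  have "lin_functional (V k) (V i \<odot> V j) (\<psi> i j k)" using lin ijk unfolding linear_family_def by blast
  from represent_hat[OF ps _ ijk(3) this] ijk
  have "\<exists>h. h \<in> Hom C (V i \<odot> V j) (V k) \<and> (\<forall>g\<in>Hom C (V k) (V i \<odot> V j). \<langle>h \<cdot> g\<rangle>\<^bsub>k\<^esub> = \<psi> i j k g)"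
    by (simp only: Bex_def) simp
  from someI_ex[OF this] show "pihat (rep_vec \<phi> \<psi>) i j k \<in> Hom C (V i \<odot> V j) (V k)"
    "\<And>g. g \<in> Hom C (V k) (V i \<odot> V j) \<Longrightarrow> \<langle>pihat (rep_vec \<phi> \<psi>) i j k \<cdot> g\<rangle>\<^bsub>k\<^esub> = \<psi> i j k g"
    using ijk unfolding rep_vec_def pihat_def by auto
qed

lemma rep_vec_check:
  assumes lin: "linear_family \<phi> \<psi>" and ijk: "i \<in> I" "j \<in> I" "k \<in> I"
  shows "picheck (rep_vec \<phi> \<psi>) i j k \<in> Hom C (V k) (V i \<odot> V j)"
    "\<And>f. f \<in> Hom C (V i \<odot> V j) (V k) \<Longrightarrow> \<langle>f \<cdot> picheck (rep_vec \<phi> \<psi>) i j k\<rangle>\<^bsub>k\<^esub> = \<phi> i j k f"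
proof -
  obtain ps where ps: "spanning (V i \<odot> V j) ps" using tensor_spanning ijk by blast
  have "lin_functional (V i \<odot> V j) (V k) (\<phi> i j k)" using lin ijk unfolding linear_family_def by blast
  from represent_check[OF ps _ ijk(3) this] ijk
  have "\<exists>c. c \<in> Hom C (V k) (V i \<odot> V j) \<and> (\<forall>f\<in>Hom C (V i \<odot> V j) (V k). \<langle>f \<cdot> c\<rangle>\<^bsub>k\<^esub> = \<phi> i j k f)"
    by (simp only: Bex_def) simp
  from someI_ex[OF this] show "picheck (rep_vec \<phi> \<psi>) i j k \<in> Hom C (V k) (V i \<odot> V j)"
    "\<And>f. f \<in> Hom C (V i \<odot> V j) (V k) \<Longrightarrow> \<langle>f \<cdot> picheck (rep_vec \<phi> \<psi>) i j k\<rangle>\<^bsub>k\<^esub> = \<phi> i j k f"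
    using ijk unfolding rep_vec_def picheck_def by auto
qed

lemma rep_vec_in_H:
  assumes lin: "linear_family \<phi> \<psi>" and S: "finite S"
    and vanish: "\<And>i j k. i \<in> I \<Longrightarrow> j \<in> I \<Longrightarrow> k \<in> I \<Longrightarrow> (i, j, k) \<notin> S \<Longrightarrow>
      (\<forall>f\<in>Hom C (V i \<odot> V j) (V k). \<phi> i j k f = \<zero> \<bbbI> \<bbbI>) \<and> (\<forall>g\<in>Hom C (V k) (V i \<odot> V j). \<psi> i j k g = \<zero> \<bbbI> \<bbbI>)"
  shows "rep_vec \<phi> \<psi> \<in> H"
proof -
  let ?z = "rep_vec \<phi> \<psi>"
  have zero: "pihat ?z i j k = \<zero> (V i \<odot> V j) (V k) \<and> picheck ?z i j k = \<zero> (V k) (V i \<odot> V j)"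
    if ijk: "i \<in> I" "j \<in> I" "k \<in> I" and out: "(i, j, k) \<notin> S" for i j k
  proof
    obtain ps where ps: "spanning (V i \<odot> V j) ps" using tensor_spanning ijk by blast
    show "pihat ?z i j k = \<zero> (V i \<odot> V j) (V k)"
      by (rule pairing_nondegenerate_hat[OF ps ijk(3)])
        (use rep_vec_hat[OF lin ijk] vanish[OF ijk out] ijk in auto)
    show "picheck ?z i j k = \<zero> (V k) (V i \<odot> V j)"
      by (rule pairing_nondegenerate_check[OF ps ijk(3)])
        (use rep_vec_check[OF lin ijk] vanish[OF ijk out] ijk in auto)
  qed
  have "{(i, j, k). i \<in> I \<and> j \<in> I \<and> k \<in> I \<and> pihat ?z i j k \<noteq> \<zero> (V i \<odot> V j) (V k)} \<subseteq> S"
    "{(i, j, k). i \<in> I \<and> j \<in> I \<and> k \<in> I \<and> picheck ?z i j k \<noteq> \<zero> (V k) (V i \<odot> V j)} \<subseteq> S"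
    using zero by auto
  then have fin: "finite {(i, j, k). i \<in> I \<and> j \<in> I \<and> k \<in> I \<and> pihat ?z i j k \<noteq> \<zero> (V i \<odot> V j) (V k)}"
    "finite {(i, j, k). i \<in> I \<and> j \<in> I \<and> k \<in> I \<and> picheck ?z i j k \<noteq> \<zero> (V k) (V i \<odot> V j)}"
    using S finite_subset by blast+
  show ?thesis unfolding Hspace_def mem_Collect_eq
  proof (intro conjI)
    show "\<forall>i\<in>I. \<forall>j\<in>I. \<forall>k\<in>I. pihat ?z i j k \<in> Hom C (V i \<odot> V j) (V k) \<and> picheck ?z i j k \<in> Hom C (V k) (V i \<odot> V j)"
      using rep_vec_hat(1)[OF lin] rep_vec_check(1)[OF lin] by blast
    show "\<forall>i j k. \<not> (i \<in> I \<and> j \<in> I \<and> k \<in> I) \<longrightarrow> pihat ?z i j k = undefined \<and> picheck ?z i j k = undefined"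
      unfolding rep_vec_def pihat_def picheck_def by auto
  qed (simp_all only: fin)
qed

lemma transp_rep_vec:
  assumes lin: "linear_family \<phi> \<psi>" and S: "finite S"
    and vanish: "\<And>i j k. i \<in> I \<Longrightarrow> j \<in> I \<Longrightarrow> k \<in> I \<Longrightarrow> (i, j, k) \<notin> S \<Longrightarrow>
      (\<forall>f\<in>Hom C (V i \<odot> V j) (V k). \<phi> i j k f = \<zero> \<bbbI> \<bbbI>) \<and> (\<forall>g\<in>Hom C (V k) (V i \<odot> V j). \<psi> i j k g = \<zero> \<bbbI> \<bbbI>)"
    and split: "\<And>x. x \<in> H \<Longrightarrow> hform C I V (F x) y
      = ksum C (\<lambda>(i, j, k). \<phi> i j k (pihat x i j k) \<oplus> \<psi> i j k (picheck x i j k)) (I \<times> I \<times> I)"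
  shows "transp C I V F y = rep_vec \<phi> \<psi>"
proof (rule transp_eqI)
  show "rep_vec \<phi> \<psi> \<in> H" by (rule rep_vec_in_H[OF lin S vanish])
  fix x assume x: "x \<in> H"
  show "hform C I V (F x) y = hform C I V x (rep_vec \<phi> \<psi>)"
    unfolding split[OF x] unfolding hform_def
    by (rule ksum_cong) (use x rep_vec_hat(2)[OF lin] rep_vec_check(2)[OF lin] in auto)
qed

lemma opA_components:
  assumes "p \<in> I" "q \<in> I" "r \<in> I"
  shows "pihat (opA C I V st b d x) p q r = (d p \<otimes> \<one> (V r)) \<cdot> (\<one> (V p) \<otimes> picheck x (st p) r q)"
    "picheck (opA C I V st b d x) p q r = (\<one> (V p) \<otimes> pihat x (st p) r q) \<cdot> (b p \<otimes> \<one> (V r))"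
  using assms unfolding opA_def pihat_def picheck_def by simp_all

lemma opB_components:
  assumes "p \<in> I" "q \<in> I" "r \<in> I"
  shows "pihat (opB C I V st b d x) p q r = (\<one> (V r) \<otimes> d (st q)) \<cdot> (picheck x r (st q) p \<otimes> \<one> (V q))"
    "picheck (opB C I V st b d x) p q r = (pihat x r (st q) p \<otimes> \<one> (V q)) \<cdot> (\<one> (V r) \<otimes> b (st q))"
  using assms unfolding opB_def pihat_def picheck_def by simp_all

definition support :: "('i, 'm) Helem \<Rightarrow> ('i \<times> 'i \<times> 'i) set" where
  "support y = {(i, j, k). i \<in> I \<and> j \<in> I \<and> k \<in> I \<and>
     (pihat y i j k \<noteq> \<zero> (V i \<odot> V j) (V k) \<or> picheck y i j k \<noteq> \<zero> (V k) (V i \<odot> V j))}"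

lemma finite_support: "y \<in> H \<Longrightarrow> finite (support y)"
proof -
  assume "y \<in> H"
  then have "finite ({(i, j, k). i \<in> I \<and> j \<in> I \<and> k \<in> I \<and> pihat y i j k \<noteq> \<zero> (V i \<odot> V j) (V k)} \<union>
      {(i, j, k). i \<in> I \<and> j \<in> I \<and> k \<in> I \<and> picheck y i j k \<noteq> \<zero> (V k) (V i \<odot> V j)})"
    unfolding Hspace_def by blast
  moreover have "support y = {(i, j, k). i \<in> I \<and> j \<in> I \<and> k \<in> I \<and> pihat y i j k \<noteq> \<zero> (V i \<odot> V j) (V k)} \<union>
      {(i, j, k). i \<in> I \<and> j \<in> I \<and> k \<in> I \<and> picheck y i j k \<noteq> \<zero> (V k) (V i \<odot> V j)}"
    unfolding support_def by auto
  ultimately show ?thesis by simp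
qed

lemma involution_reindex:
  assumes "\<And>a. a \<in> S \<Longrightarrow> h a \<in> S" "\<And>a. a \<in> S \<Longrightarrow> h (h a) = a"
    and "\<And>a. a \<in> S \<Longrightarrow> f (h a) = g a"
  shows "ksum C f S = ksum C g S"
proof (rule ksum_reindex[of h])
  show "bij_betw h S S" by (rule bij_betw_byWitness[where f'=h]) (use assms in auto)
qed (use assms in auto)

text \<open>After relabelling \<open>(p, q, r) = (st i, k, j)\<close>, the components of \<open>x\<close>
  enter \<open>\<langle>A x, y\<rangle>\<close> through the following linear forms.\<close>

definition A_hat_form :: "('i, 'm) Helem \<Rightarrow> 'i \<Rightarrow> 'i \<Rightarrow> 'i \<Rightarrow> 'm \<Rightarrow> 'm" where
  "A_hat_form y i j k f = \<langle>pihat y (st i) k j \<cdot> (\<one> (V (st i)) \<otimes> f) \<cdot> (b (st i) \<otimes> \<one> (V j))\<rangle>\<^bsub>j\<^esub>"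

definition A_check_form :: "('i, 'm) Helem \<Rightarrow> 'i \<Rightarrow> 'i \<Rightarrow> 'i \<Rightarrow> 'm \<Rightarrow> 'm" where
  "A_check_form y i j k g = \<langle>(d (st i) \<otimes> \<one> (V j)) \<cdot> (\<one> (V (st i)) \<otimes> g) \<cdot> picheck y (st i) k j\<rangle>\<^bsub>j\<^esub>"

lemma A_forms_linear: "y \<in> H \<Longrightarrow> linear_family (A_hat_form y) (A_check_form y)"
  unfolding linear_family_def A_hat_form_def A_check_form_def
  by (auto intro!: lin_whisker_left lin_sandwich)

lemma A_forms_vanish:
  assumes "i \<in> I" "j \<in> I" "k \<in> I" "(st i, k, j) \<notin> support y"
  shows "\<forall>f\<in>Hom C (V i \<odot> V j) (V k). A_hat_form y i j k f = \<zero> \<bbbI> \<bbbI>"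
    "\<forall>g\<in>Hom C (V k) (V i \<odot> V j). A_check_form y i j k g = \<zero> \<bbbI> \<bbbI>"
  using assms unfolding support_def A_hat_form_def A_check_form_def by auto

lemma hform_opA:
  assumes x: "x \<in> H" and y: "y \<in> H"
  shows "hform C I V (opA C I V st b d x) y
    = ksum C (\<lambda>(i, j, k). A_hat_form y i j k (pihat x i j k) \<oplus> A_check_form y i j k (picheck x i j k)) (I \<times> I \<times> I)"
  unfolding hform_def
proof (rule involution_reindex[where h="\<lambda>(i, j, k). (st i, k, j)"])
  fix a assume "a \<in> I \<times> I \<times> I"
  then obtain i j k where a: "a = (i, j, k)" "i \<in> I" "j \<in> I" "k \<in> I" by auto
  show "(\<lambda>(i, j, k). \<langle>pihat (opA C I V st b d x) i j k \<cdot> picheck y i j k\<rangle>\<^bsub>k\<^esub> \<oplus>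
      \<langle>pihat y i j k \<cdot> picheck (opA C I V st b d x) i j k\<rangle>\<^bsub>k\<^esub>) ((\<lambda>(i, j, k). (st i, k, j)) a)
    = (\<lambda>(i, j, k). A_hat_form y i j k (pihat x i j k) \<oplus> A_check_form y i j k (picheck x i j k)) a"
    using a x y by (simp add: opA_components A_hat_form_def A_check_form_def add_comm)
qed auto

lemma transp_opA:
  assumes y: "y \<in> H"
  shows "transp C I V (opA C I V st b d) y = rep_vec (A_hat_form y) (A_check_form y)"
proof (rule transp_rep_vec[OF A_forms_linear[OF y]])
  let ?S = "(\<lambda>(i, j, k). (st i, k, j)) -` support y \<inter> I \<times> I \<times> I"
  show "finite ?S" using finite_support[OF y] by (rule finite_vimage_IntI) (auto simp: inj_on_def dest: dual_inj)
qed (use A_forms_vanish hform_opA y in auto)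

text \<open>The transpose of \<open>B\<close>, in the same way with the relabelling \<open>(p, q, r) = (k, st j, i)\<close>.\<close>

definition B_hat_form :: "('i, 'm) Helem \<Rightarrow> 'i \<Rightarrow> 'i \<Rightarrow> 'i \<Rightarrow> 'm \<Rightarrow> 'm" where
  "B_hat_form y i j k f = \<langle>pihat y k (st j) i \<cdot> (f \<otimes> \<one> (V (st j))) \<cdot> (\<one> (V i) \<otimes> b j)\<rangle>\<^bsub>i\<^esub>"

definition B_check_form :: "('i, 'm) Helem \<Rightarrow> 'i \<Rightarrow> 'i \<Rightarrow> 'i \<Rightarrow> 'm \<Rightarrow> 'm" where
  "B_check_form y i j k g = \<langle>(\<one> (V i) \<otimes> d j) \<cdot> (g \<otimes> \<one> (V (st j))) \<cdot> picheck y k (st j) i\<rangle>\<^bsub>i\<^esub>"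

lemma B_forms_linear: "y \<in> H \<Longrightarrow> linear_family (B_hat_form y) (B_check_form y)"
  unfolding linear_family_def B_hat_form_def B_check_form_def
  by (auto intro!: lin_whisker_right lin_sandwich)

lemma B_forms_vanish:
  assumes "i \<in> I" "j \<in> I" "k \<in> I" "(k, st j, i) \<notin> support y"
  shows "\<forall>f\<in>Hom C (V i \<odot> V j) (V k). B_hat_form y i j k f = \<zero> \<bbbI> \<bbbI>"
    "\<forall>g\<in>Hom C (V k) (V i \<odot> V j). B_check_form y i j k g = \<zero> \<bbbI> \<bbbI>"
  using assms unfolding support_def B_hat_form_def B_check_form_def by auto

lemma hform_opB:
  assumes x: "x \<in> H" and y: "y \<in> H"
  shows "hform C I V (opB C I V st b d x) y
    = ksum C (\<lambda>(i, j, k). B_hat_form y i j k (pihat x i j k) \<oplus> B_check_form y i j k (picheck x i j k)) (I \<times> I \<times> I)"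
  unfolding hform_def
proof (rule involution_reindex[where h="\<lambda>(i, j, k). (k, st j, i)"])
  fix a assume "a \<in> I \<times> I \<times> I"
  then obtain i j k where a: "a = (i, j, k)" "i \<in> I" "j \<in> I" "k \<in> I" by auto
  show "(\<lambda>(i, j, k). \<langle>pihat (opB C I V st b d x) i j k \<cdot> picheck y i j k\<rangle>\<^bsub>k\<^esub> \<oplus>
      \<langle>pihat y i j k \<cdot> picheck (opB C I V st b d x) i j k\<rangle>\<^bsub>k\<^esub>) ((\<lambda>(i, j, k). (k, st j, i)) a)
    = (\<lambda>(i, j, k). B_hat_form y i j k (pihat x i j k) \<oplus> B_check_form y i j k (picheck x i j k)) a"
    using a x y by (simp add: opB_components B_hat_form_def B_check_form_def add_comm)
qed auto

lemma transp_opB: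
  assumes y: "y \<in> H"
  shows "transp C I V (opB C I V st b d) y = rep_vec (B_hat_form y) (B_check_form y)"
proof (rule transp_rep_vec[OF B_forms_linear[OF y]])
  let ?S = "(\<lambda>(i, j, k). (k, st j, i)) -` support y \<inter> I \<times> I \<times> I"
  show "finite ?S" using finite_support[OF y] by (rule finite_vimage_IntI) (auto simp: inj_on_def dest: dual_inj)
qed (use B_forms_vanish hform_opB y in auto)

text \<open>Identity (i), one summand at a time: the summand of \<open>Tform(u \<otimes> v \<otimes> x \<otimes> A\<^sup>*y)\<close> at
  \<open>(i, j, k, l, m, n)\<close> is the summand of \<open>Tbar(y \<otimes> u \<otimes> Av \<otimes> x)\<close> at \<open>(st i, k, j, l, n, m)\<close>.\<close>

lemma summand_identity_i:
  assumes H: "u \<in> H" "v \<in> H" "x \<in> H" "y \<in> H"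
    and I: "i \<in> I" "j \<in> I" "k \<in> I" "l \<in> I" "m \<in> I" "n \<in> I"
  shows "\<langle>pihat y (st i) m n \<cdot> (\<one> (V (st i)) \<otimes> pihat u k l m)
            \<cdot> (picheck (opA C I V st b d v) (st i) k j \<otimes> \<one> (V l)) \<cdot> picheck x j l n\<rangle>\<^bsub>n\<^esub>
       = \<langle>pihat u k l m \<cdot> (pihat v i j k \<otimes> \<one> (V l)) \<cdot> (\<one> (V i) \<otimes> picheck x j l n)
            \<cdot> picheck (transp C I V (opA C I V st b d) y) i n m\<rangle>\<^bsub>m\<^esub>"
proof -
  define E where "E = pihat u k l m \<cdot> (pihat v i j k \<otimes> \<one> (V l)) \<cdot> (\<one> (V i) \<otimes> picheck x j l n)"
  have E: "E \<in> Hom C (V i \<odot> V n) (V m)" unfolding E_def using H I by simp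
  have bend: "(\<one> (V (st i)) \<otimes> E) \<cdot> (b (st i) \<otimes> \<one> (V n))
      = (\<one> (V (st i)) \<otimes> pihat u k l m)
          \<cdot> (((\<one> (V (st i)) \<otimes> pihat v i j k) \<cdot> (b (st i) \<otimes> \<one> (V j))) \<otimes> \<one> (V l)) \<cdot> picheck x j l n"
    unfolding E_def by (rule unit_through_composite) (use H I in simp_all)
  have z: "picheck (transp C I V (opA C I V st b d) y) i n m \<in> Hom C (V m) (V i \<odot> V n)"
    unfolding transp_opA[OF H(4)] using rep_vec_check(1)[OF A_forms_linear[OF H(4)] I(1,6,5)] .
  have "\<langle>E \<cdot> picheck (transp C I V (opA C I V st b d) y) i n m\<rangle>\<^bsub>m\<^esub> = A_hat_form y i n m E"
    unfolding transp_opA[OF H(4)] using rep_vec_check(2)[OF A_forms_linear[OF H(4)] I(1,6,5) E] .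
  also have "\<dots> = \<langle>pihat y (st i) m n \<cdot> (\<one> (V (st i)) \<otimes> E) \<cdot> (b (st i) \<otimes> \<one> (V n))\<rangle>\<^bsub>n\<^esub>"
    unfolding A_hat_form_def ..
  also have "\<dots> = \<langle>pihat y (st i) m n \<cdot> (\<one> (V (st i)) \<otimes> pihat u k l m)
            \<cdot> (picheck (opA C I V st b d v) (st i) k j \<otimes> \<one> (V l)) \<cdot> picheck x j l n\<rangle>\<^bsub>n\<^esub>"
    unfolding bend using I by (simp add: opA_components)
  finally show ?thesis using H I z unfolding E_def by simp
qed

text \<open>Identity (ii), one summand at a time: the summand of \<open>Tbar(u \<otimes> Av \<otimes> Bx \<otimes> y)\<close> at
  \<open>(i, j, k, l, m, n)\<close> is the summand of \<open>Tform(u \<otimes> x \<otimes> v \<otimes> y)\<close> at \<open>(k, st j, i, n, m, l)\<close>.\<close>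

lemma summand_identity_ii:
  assumes H: "u \<in> H" "v \<in> H" "x \<in> H" "y \<in> H"
    and I: "i \<in> I" "j \<in> I" "k \<in> I" "l \<in> I" "m \<in> I" "n \<in> I"
  shows "\<langle>pihat u i n m \<cdot> (pihat x k (st j) i \<otimes> \<one> (V n)) \<cdot> (\<one> (V k) \<otimes> picheck v (st j) n l)
            \<cdot> picheck y k l m\<rangle>\<^bsub>m\<^esub>
       = \<langle>pihat u i n m \<cdot> (\<one> (V i) \<otimes> pihat (opA C I V st b d v) j l n)
            \<cdot> (picheck (opB C I V st b d x) i j k \<otimes> \<one> (V l)) \<cdot> picheck y k l m\<rangle>\<^bsub>m\<^esub>"
proof -
  have "(\<one> (V i) \<otimes> pihat (opA C I V st b d v) j l n) \<cdot> (picheck (opB C I V st b d x) i j k \<otimes> \<one> (V l))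
      = (\<one> (V i) \<otimes> ((d j \<otimes> \<one> (V n)) \<cdot> (\<one> (V j) \<otimes> picheck v (st j) n l)))
          \<cdot> (((pihat x k (st j) i \<otimes> \<one> (V j)) \<cdot> (\<one> (V k) \<otimes> b (st j))) \<otimes> \<one> (V l))"
    using I by (simp add: opA_components opB_components)
  also have "\<dots> = (pihat x k (st j) i \<otimes> \<one> (V n)) \<cdot> (\<one> (V k) \<otimes> picheck v (st j) n l)"
    by (rule counit_cancels_unit_left[where Q="V (st j)"]) (use H I zigzag_left[of "st j"] in simp_all)
  finally have "(\<one> (V i) \<otimes> pihat (opA C I V st b d v) j l n) \<cdot> (picheck (opB C I V st b d x) i j k \<otimes> \<one> (V l))
      \<cdot> picheck y k l m = (pihat x k (st j) i \<otimes> \<one> (V n)) \<cdot> (\<one> (V k) \<otimes> picheck v (st j) n l) \<cdot> picheck y k l m"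
    by (rule cmp_prefix_eq) (use H I in \<open>simp_all add: opA_components opB_components\<close>)
  then show ?thesis by (simp only:)
qed

text \<open>Identity (iii), one summand at a time: the summand of \<open>Tbar(v \<otimes> Bx \<otimes> y \<otimes> B\<^sup>*u)\<close> at
  \<open>(i, j, k, l, m, n)\<close> is the summand of \<open>Tform(u \<otimes> v \<otimes> x \<otimes> y)\<close> at \<open>(i, n, m, st l, k, j)\<close>.\<close>

lemma summand_identity_iii:
  assumes H: "u \<in> H" "v \<in> H" "x \<in> H" "y \<in> H"
    and I: "i \<in> I" "j \<in> I" "k \<in> I" "l \<in> I" "m \<in> I" "n \<in> I"
  shows "\<langle>pihat u m (st l) k \<cdot> (pihat v i n m \<otimes> \<one> (V (st l))) \<cdot> (\<one> (V i) \<otimes> picheck x n (st l) j)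
            \<cdot> picheck y i j k\<rangle>\<^bsub>k\<^esub>
       = \<langle>pihat v i n m \<cdot> (\<one> (V i) \<otimes> pihat (opB C I V st b d x) j l n) \<cdot> (picheck y i j k \<otimes> \<one> (V l))
            \<cdot> picheck (transp C I V (opB C I V st b d) u) k l m\<rangle>\<^bsub>m\<^esub>"
proof -
  define G where "G = pihat v i n m \<cdot> (\<one> (V i) \<otimes> pihat (opB C I V st b d x) j l n) \<cdot> (picheck y i j k \<otimes> \<one> (V l))"
  have G: "G \<in> Hom C (V k \<odot> V l) (V m)" unfolding G_def using H I by (simp add: opB_components)
  have z: "picheck (transp C I V (opB C I V st b d) u) k l m \<in> Hom C (V m) (V k \<odot> V l)"
    unfolding transp_opB[OF H(1)] using rep_vec_check(1)[OF B_forms_linear[OF H(1)] I(3,4,5)] .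
  have bend: "(G \<otimes> \<one> (V (st l))) \<cdot> (\<one> (V k) \<otimes> b l)
      = (pihat v i n m \<otimes> \<one> (V (st l))) \<cdot> (\<one> (V i) \<otimes> picheck x n (st l) j) \<cdot> picheck y i j k"
    unfolding G_def using I
    by (simp only: opB_components, intro unit_cancels_counit_right) (use H I zigzag_right[of "st l"] in simp_all)
  have "\<langle>G \<cdot> picheck (transp C I V (opB C I V st b d) u) k l m\<rangle>\<^bsub>m\<^esub> = B_hat_form u k l m G"
    unfolding transp_opB[OF H(1)] using rep_vec_check(2)[OF B_forms_linear[OF H(1)] I(3,4,5) G] .
  also have "\<dots> = \<langle>pihat u m (st l) k \<cdot> (G \<otimes> \<one> (V (st l))) \<cdot> (\<one> (V k) \<otimes> b l)\<rangle>\<^bsub>k\<^esub>"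
    unfolding B_hat_form_def ..
  finally have "\<langle>G \<cdot> picheck (transp C I V (opB C I V st b d) u) k l m\<rangle>\<^bsub>m\<^esub>
      = \<langle>pihat u m (st l) k \<cdot> (pihat v i n m \<otimes> \<one> (V (st l))) \<cdot> (\<one> (V i) \<otimes> picheck x n (st l) j)
          \<cdot> picheck y i j k\<rangle>\<^bsub>k\<^esub>"
    unfolding bend .
  moreover have "pihat (opB C I V st b d x) j l n \<in> Hom C (V j \<odot> V l) (V n)"
    using H I by (simp add: opB_components)
  ultimately show ?thesis using H I z unfolding G_def by simp
qed

lemma identity_i:
  assumes "u \<in> H" "v \<in> H" "x \<in> H" "y \<in> H"
  shows "Tform C I V u v x (transp C I V (opA C I V st b d) y) = Tbar C I V y u (opA C I V st b d v) x"
  unfolding Tform_def Tbar_def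
  by (rule involution_reindex[where h="\<lambda>(i, j, k, l, m, n). (st i, k, j, l, n, m)", symmetric])
    (use summand_identity_i[OF assms] in auto)

lemma identity_ii:
  assumes "u \<in> H" "v \<in> H" "x \<in> H" "y \<in> H"
  shows "Tform C I V u x v y = Tbar C I V u (opA C I V st b d v) (opB C I V st b d x) y"
  unfolding Tform_def Tbar_def
  by (rule involution_reindex[where h="\<lambda>(i, j, k, l, m, n). (k, st j, i, n, m, l)"])
    (use summand_identity_ii[OF assms] in auto)

lemma identity_iii:
  assumes "u \<in> H" "v \<in> H" "x \<in> H" "y \<in> H"
  shows "Tform C I V u v x y = Tbar C I V v (opB C I V st b d x) y (transp C I V (opB C I V st b d) u)"
  unfolding Tform_def Tbar_def
  by (rule involution_reindex[where h="\<lambda>(i, j, k, l, m, n). (i, n, m, st l, k, j)"])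
    (use summand_identity_iii[OF assms] in auto)

end

theorem lemma2p1:
  fixes C :: "('o, 'm) mcat" and I :: "'i set" and V :: "'i \<Rightarrow> 'o"
    and st :: "'i \<Rightarrow> 'i" and b d :: "'i \<Rightarrow> 'm"
  assumes psi: "psi_system C I V st b d"
    and u: "u \<in> Hspace C I V" and v: "v \<in> Hspace C I V"
    and x: "x \<in> Hspace C I V" and y: "y \<in> Hspace C I V"
  shows "(Tform C I V u v x (transp C I V (opA C I V st b d) y)
           = Tbar C I V y u (opA C I V st b d v) x) \<and>
         (Tform C I V u x v y
           = Tbar C I V u (opA C I V st b d v) (opB C I V st b d x) y) \<and>
         (Tform C I V u v x y
           = Tbar C I V v (opB C I V st b d x) y (transp C I V (opB C I V st b d) u))"
proof -
  interpret psi_sys C I V st b d by (rule psi_sys.intro) (rule psi)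
  show ?thesis using identity_i[OF u v x y] identity_ii[OF u v x y] identity_iii[OF u v x y] by blast
qed

end
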